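(* In the setting described in the context, \[ u(r,t)\ge\Big(\inf_{r\in(0,R)}u_0(r)\Big)\,e^{-\kappa t}\qquad\text{for all }r\in(0,R)\text{ and }t\in(0,T_{max}), \] where $\kappa:=\chi\mu+\frac{2(n-1)\chi\mu}{3\sqrt3\,n}$.
   Context: Let $n\ge1$, $R>0$, $\Omega=B_R(0)\subset\mathbb{R}^n$, $\chi>0$, and let $u_0\in C^3(\bar\Omega)$ be radially symmetric and positive in $\bar\Omega$ with $\partial u_0/\partial\nu=0$ on $\partial\Omega$; let $\mu:=\frac{1}{|\Omega|}\int_\Omega u_0$. Let $T_{max}\in(0,\infty]$ and $(u,v)$ denote the maximally extended classical solution of the problem $u_t=\nabla\cdot\big(\frac{u\nabla u}{\sqrt{u^2+|\nabla u|^2}}\big)-\chi\nabla\cdot\big(\frac{u\nabla v}{\sqrt{1+|\nabla v|^2}}\big)$, $0=\Delta v-\mu+u$ in $\Omega\times(0,T_{max})$, $\big(\frac{u\nabla u}{\sqrt{u^2+|\nabla u|^2}}-\chi\frac{u\nabla v}{\sqrt{1+|\nabla v|^2}}\big)\cdot\nu=0$ on $\partial\Omega$, $u(\cdot,0)=u_0$; that is, $u\in C^{2,1}(\bar\Omega\times[0,T_{max}))$ and $v\in C^{2,0}(\bar\Omega\times[0,T_{max}))$ are the uniquely determined positive radially symmetric functions solving this problem classically, and $T_{max}$ is the maximal time of existence of this classical solution. By radial symmetry we write $u(r,t)$, $v(r,t)$ with $r=|x|\in(0,R)$. *)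

theory Defs
  imports "HOL-Analysis.Analysis"
begin

text \<open>Spatial domain: Omega = ball 0 R in real^'n (n = CARD('n) >= 1), closure = cball 0 R.
  Derivatives up to the boundary are taken within the closed ball.\<close>

definition C3_cball :: "real \<Rightarrow> (real^'n \<Rightarrow> real) \<Rightarrow> bool" where
  "C3_cball R f \<longleftrightarrow> (\<exists>g H T3.
     continuous_on (cball 0 R) f \<and> continuous_on (cball 0 R) g \<and>
     continuous_on (cball 0 R) H \<and> continuous_on (cball 0 R) T3 \<and>
     (\<forall>x\<in>cball 0 R. (f has_derivative (\<lambda>h. g x \<bullet> h)) (at x within cball 0 R)) \<and>
     (\<forall>x\<in>cball 0 R. (g has_derivative (\<lambda>h. H x *v h)) (at x within cball 0 R)) \<and>
     (\<forall>x\<in>cball 0 R. \<forall>i j. ((\<lambda>y. H y $ i $ j) has_derivative (\<lambda>h. T3 x $ i $ j \<bullet> h))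
                               (at x within cball 0 R)))"

definition neumann_zero :: "real \<Rightarrow> (real^'n \<Rightarrow> real) \<Rightarrow> bool" where
  "neumann_zero R f \<longleftrightarrow> (\<forall>x. norm x = R \<longrightarrow>
     (\<exists>Df. (f has_derivative Df) (at x within cball 0 R) \<and> Df ((1/R) *\<^sub>R x) = 0))"

definition radial :: "(real^'n \<Rightarrow> 'a) \<Rightarrow> bool" where
  "radial f \<longleftrightarrow> (\<forall>x y. norm x = norm y \<longrightarrow> f x = f y)"

definition mean_ball :: "real \<Rightarrow> (real^'n \<Rightarrow> real) \<Rightarrow> real" where
  "mean_ball R f = integral (ball 0 R) f / measure lebesgue (ball (0::real^'n) R)"

definition has_divergence :: "(real^'n \<Rightarrow> real^'n) \<Rightarrow> real \<Rightarrow> real^'n \<Rightarrow> bool" where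
  "has_divergence G d x \<longleftrightarrow>
     (\<exists>DG. (G has_derivative DG) (at x) \<and> d = (\<Sum>i\<in>UNIV. DG (axis i 1) $ i))"

definition flux :: "real \<Rightarrow> real \<Rightarrow> real^'n \<Rightarrow> real^'n \<Rightarrow> real^'n" where
  "flux chi u gu gv =
     (u / sqrt (u\<^sup>2 + (norm gu)\<^sup>2)) *\<^sub>R gu - (chi * u / sqrt (1 + (norm gv)\<^sup>2)) *\<^sub>R gv"

definition classical_sol ::
  "real \<Rightarrow> real \<Rightarrow> ereal \<Rightarrow> (real^'n \<Rightarrow> real) \<Rightarrow>
   (real^'n \<Rightarrow> real \<Rightarrow> real) \<Rightarrow> (real^'n \<Rightarrow> real \<Rightarrow> real) \<Rightarrow> bool" where
  "classical_sol R chi T u0 u v \<longleftrightarrow>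
    (let S = {(x,t). x \<in> cball 0 R \<and> 0 \<le> t \<and> ereal t < T};
         I = {t. 0 \<le> t \<and> ereal t < T};
         \<mu> = mean_ball R u0 in
    (\<exists>(gu :: real^'n \<Rightarrow> real \<Rightarrow> real^'n) (Hu :: real^'n \<Rightarrow> real \<Rightarrow> real^'n^'n) ut
       (gv :: real^'n \<Rightarrow> real \<Rightarrow> real^'n) (Hv :: real^'n \<Rightarrow> real \<Rightarrow> real^'n^'n).
      continuous_on S (\<lambda>(x,t). u x t) \<and> continuous_on S (\<lambda>(x,t). gu x t) \<and>
      continuous_on S (\<lambda>(x,t). Hu x t) \<and> continuous_on S (\<lambda>(x,t). ut x t) \<and>
      continuous_on S (\<lambda>(x,t). v x t) \<and> continuous_on S (\<lambda>(x,t). gv x t) \<and>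
      continuous_on S (\<lambda>(x,t). Hv x t) \<and>
      (\<forall>(x,t)\<in>S. ((\<lambda>y. u y t) has_derivative (\<lambda>h. gu x t \<bullet> h)) (at x within cball 0 R)) \<and>
      (\<forall>(x,t)\<in>S. ((\<lambda>y. gu y t) has_derivative (\<lambda>h. Hu x t *v h)) (at x within cball 0 R)) \<and>
      (\<forall>(x,t)\<in>S. ((\<lambda>s. u x s) has_real_derivative ut x t) (at t within I)) \<and>
      (\<forall>(x,t)\<in>S. ((\<lambda>y. v y t) has_derivative (\<lambda>h. gv x t \<bullet> h)) (at x within cball 0 R)) \<and>
      (\<forall>(x,t)\<in>S. ((\<lambda>y. gv y t) has_derivative (\<lambda>h. Hv x t *v h)) (at x within cball 0 R)) \<and>
      (\<forall>(x,t)\<in>S. u x t > 0 \<and> v x t > 0) \<and>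
      (\<forall>t\<in>I. radial (\<lambda>x. u x t) \<and> radial (\<lambda>x. v x t)) \<and>
      (\<forall>x\<in>ball 0 R. \<forall>t. 0 < t \<and> ereal t < T \<longrightarrow>
         has_divergence (\<lambda>y. flux chi (u y t) (gu y t) (gv y t)) (ut x t) x) \<and>
      (\<forall>x\<in>ball 0 R. \<forall>t. 0 < t \<and> ereal t < T \<longrightarrow>
         0 = (\<Sum>i\<in>UNIV. Hv x t $ i $ i) - \<mu> + u x t) \<and>
      (\<forall>x. norm x = R \<longrightarrow> (\<forall>t. 0 < t \<and> ereal t < T \<longrightarrow>
         flux chi (u x t) (gu x t) (gv x t) \<bullet> ((1/R) *\<^sub>R x) = 0)) \<and>
      (\<forall>x\<in>cball 0 R. u x 0 = u0 x)))"

definition maximal_sol ::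
  "real \<Rightarrow> real \<Rightarrow> ereal \<Rightarrow> (real^'n \<Rightarrow> real) \<Rightarrow>
   (real^'n \<Rightarrow> real \<Rightarrow> real) \<Rightarrow> (real^'n \<Rightarrow> real \<Rightarrow> real) \<Rightarrow> bool" where
  "maximal_sol R chi Tmax u0 u v \<longleftrightarrow> 0 < Tmax \<and> classical_sol R chi Tmax u0 u v \<and>
    (\<forall>T' u' v'. Tmax < T' \<longrightarrow> classical_sol R chi T' u0 u' v' \<longrightarrow>
       \<not> (\<forall>x\<in>cball 0 R. \<forall>t. 0 \<le> t \<and> ereal t < Tmax \<longrightarrow> u' x t = u x t))"

end

theory Submission
  imports Defs
begin

text \<open>Along a ray \<open>s \<mapsto> s e\<close> the radial solution satisfies
  \<open>u\<^sub>t = \<Phi>' + (n - 1) \<Phi> / r\<close> with the flux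
  \<open>\<Phi> = u u\<^sub>r / \<surd>(u\<^sup>2 + u\<^sub>r\<^sup>2) - \<chi> u v\<^sub>r / \<surd>(1 + v\<^sub>r\<^sup>2)\<close>, and
  \<open>v\<^sub>r\<^sub>r + (n - 1) v\<^sub>r / r = \<mu> - u\<close>. Integrating the latter against \<open>r\<^sup>n\<^sup>-\<^sup>1\<close> gives
  \<open>v\<^sub>r \<le> \<mu> r / n\<close>. At a spatial minimum of \<open>u(\<cdot>, t)\<close> we have \<open>u\<^sub>r = 0\<close> and \<open>u\<^sub>r\<^sub>r \<ge> 0\<close>,
  so only the chemotactic part of \<open>u\<^sub>t\<close> can be negative; after eliminating \<open>v\<^sub>r\<^sub>r\<close> it is
  bounded below by \<open>-\<kappa> u\<close>, the constant \<open>2 / (3\<surd>3)\<close> being the maximum of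
  \<open>A\<^sup>2 / (1 + A\<^sup>2)\<^sup>3\<^sup>/\<^sup>2\<close>. A first-touching argument against
  \<open>(m - \<epsilon>) e\<^sup>-\<^sup>(\<^sup>\<kappa>\<^sup>+\<^sup>\<epsilon>\<^sup>)\<^sup>t\<close> then yields the bound.\<close>

section \<open>Calculus on intervals\<close>

lemma real_derivative_unique_Icc:
  fixes f :: "real \<Rightarrow> real"
  assumes "a < b" "x \<in> {a..b}"
    and "(f has_real_derivative D1) (at x within {a..b})"
    and "(f has_real_derivative D2) (at x within {a..b})"
  shows "D1 = D2"
  using assms by (intro has_field_derivative_unique[of f D1 x "{a..b}" D2])
    (auto simp: trivial_limit_within)

lemma continuous_on_Icc_lower_bound:
  fixes f :: "real \<Rightarrow> real"
  assumes ab: "a < b" and c: "continuous_on {a..b} f"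
    and ge: "\<And>s. a < s \<Longrightarrow> s < b \<Longrightarrow> k \<le> f s" and s: "s \<in> {a..b}"
  shows "k \<le> f s"
proof -
  consider "s = a" | "s = b" | "a < s" "s < b" using s by fastforce
  thus ?thesis
  proof cases
    case 1
    have "(f \<longlongrightarrow> f a) (at_right a)" using continuous_on_Icc_at_rightD[OF c ab] .
    moreover have "eventually (\<lambda>s. k \<le> f s) (at_right a)"
      by (rule eventually_at_rightI[OF _ ab]) (use ge in auto)
    ultimately show ?thesis using 1 tendsto_lowerbound by fastforce
  next
    case 2
    have "(f \<longlongrightarrow> f b) (at_left b)" using continuous_on_Icc_at_leftD[OF c ab] .
    moreover have "eventually (\<lambda>s. k \<le> f s) (at_left b)"
      by (rule eventually_at_leftI[OF _ ab]) (use ge in auto)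
    ultimately show ?thesis using 2 tendsto_lowerbound by fastforce
  next
    case 3 thus ?thesis using ge by simp
  qed
qed

lemma continuous_on_Icc_eq_on_closure:
  fixes f g :: "real \<Rightarrow> real"
  assumes "a < b" "continuous_on {a..b} f" "continuous_on {a..b} g"
    and "\<And>s. a < s \<Longrightarrow> s < b \<Longrightarrow> f s = g s" and "s \<in> {a..b}"
  shows "f s = g s"
proof -
  have "0 \<le> f s - g s"
    by (rule continuous_on_Icc_lower_bound[of a b "\<lambda>s. f s - g s", OF assms(1) _ _ assms(5)])
      (use assms in \<open>auto intro: continuous_intros\<close>)
  moreover have "0 \<le> g s - f s"
    by (rule continuous_on_Icc_lower_bound[of a b "\<lambda>s. g s - f s", OF assms(1) _ _ assms(5)])
      (use assms in \<open>auto intro: continuous_intros\<close>)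
  ultimately show ?thesis by simp
qed

lemma continuous_on_ereal_interval_eq_at_0:
  fixes f :: "real \<Rightarrow> real" and T :: ereal
  assumes T: "0 < T" and c: "continuous_on {t. 0 \<le> t \<and> ereal t < T} f"
    and eq: "\<And>t. 0 < t \<Longrightarrow> ereal t < T \<Longrightarrow> f t = k"
  shows "f 0 = k"
proof -
  obtain T1 where T1: "0 < ereal T1" "ereal T1 < T" using ereal_dense2[OF T] by auto
  have sub: "{0..T1} \<subseteq> {t. 0 \<le> t \<and> ereal t < T}"
    using T1 by (auto intro: le_less_trans[of _ "ereal T1"])
  have lt: "ereal t < T" if "t < T1" for t
  proof -
    have "ereal t < ereal T1" using that by simp
    thus ?thesis using T1(2) by (rule less_trans)
  qed
  have "f 0 = (\<lambda>_. k) 0"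
  proof (rule continuous_on_Icc_eq_on_closure[of 0 T1 f "\<lambda>_. k" 0])
    show "0 < T1" using T1 by simp
    show "continuous_on {0..T1} f" using continuous_on_subset[OF c sub] .
  qed (use T1 lt eq in auto)
  thus ?thesis by simp
qed

lemma deriv_nonpos_at_right_end_min:
  fixes h :: "real \<Rightarrow> real"
  assumes ac: "a < c" and d: "(h has_real_derivative D) (at c within {a..c})"
    and min: "\<And>t. a \<le> t \<Longrightarrow> t < c \<Longrightarrow> h c \<le> h t"
  shows "D \<le> 0"
proof -
  have "((\<lambda>t. (h t - h c) / (t - c)) \<longlongrightarrow> D) (at c within {a..c})"
    using d by (simp add: has_field_derivative_iff)
  hence lim: "((\<lambda>t. (h t - h c) / (t - c)) \<longlongrightarrow> D) (at_left c)"
    using at_within_Icc_at_left[OF ac] by simp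
  have "eventually (\<lambda>t. (h t - h c) / (t - c) \<le> 0) (at_left c)"
  proof (rule eventually_at_leftI[OF _ ac])
    fix t assume "t \<in> {a<..<c}"
    thus "(h t - h c) / (t - c) \<le> 0" using min[of t] by (auto intro: divide_nonneg_neg)
  qed
  thus ?thesis using tendsto_upperbound[OF lim] by simp
qed

text \<open>If the derivative of \<open>h\<close> vanished at a left-sided minimum with negative slope, \<open>h\<close> would
  increase strictly just before the minimum point.\<close>
lemma second_deriv_nonneg_at_right_end_min:
  fixes h h' :: "real \<Rightarrow> real"
  assumes as0: "a < s0"
    and dh: "\<And>s. s \<in> {a..s0} \<Longrightarrow> (h has_real_derivative h' s) (at s within {a..s0})"
    and dh': "(h' has_real_derivative c) (at s0 within {a..s0})"
    and crit: "h' s0 = 0"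
    and min: "\<And>s. s \<in> {a..s0} \<Longrightarrow> h s0 \<le> h s"
  shows "c \<ge> 0"
proof (rule ccontr)
  assume "\<not> c \<ge> 0" hence c: "c < 0" by simp
  have "((\<lambda>s. (h' s - h' s0) / (s - s0)) \<longlongrightarrow> c) (at s0 within {a..s0})"
    using dh' by (simp add: has_field_derivative_iff)
  hence "eventually (\<lambda>s. (h' s - h' s0) / (s - s0) < c/2) (at s0 within {a..s0})"
    using c by (intro order_tendstoD) auto
  then obtain d where d: "d > 0"
    and dd: "\<And>s. s \<in> {a..s0} \<Longrightarrow> s \<noteq> s0 \<Longrightarrow> dist s s0 < d \<Longrightarrow> h' s / (s - s0) < c/2"
    unfolding eventually_at crit by auto
  define s1 where "s1 = max a (s0 - d/2)"
  have s1: "a \<le> s1" "s1 < s0" "s0 - s1 < d" using as0 d by (auto simp: s1_def)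
  have pos: "h' s > 0" if "s1 < s" "s < s0" for s
  proof -
    have "h' s / (s - s0) < c/2" using dd[of s] that s1 by (auto simp: dist_real_def)
    hence "h' s / (s - s0) < 0" using c by linarith
    thus ?thesis using that by (simp add: divide_less_0_iff)
  qed
  have "\<exists>x\<in>{s1<..<s0}. h s0 - h s1 = (\<lambda>y. h' x * y) (s0 - s1)"
  proof (rule mvt_simple[OF s1(2)])
    fix x assume "s1 \<le> x" "x \<le> s0"
    hence "(h has_real_derivative h' x) (at x within {s1..s0})"
      using dh[of x] s1 by (auto intro: DERIV_subset)
    thus "(h has_derivative (\<lambda>y. h' x * y)) (at x within {s1..s0})"
      by (simp add: has_field_derivative_def)
  qed
  then obtain x where x: "s1 < x" "x < s0" "h s0 - h s1 = h' x * (s0 - s1)" by auto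
  have "h' x * (s0 - s1) > 0" using pos[OF x(1,2)] s1 by simp
  moreover have "h s0 \<le> h s1" using min[of s1] s1 by auto
  ultimately show False using x(3) by simp
qed

lemma le_of_perturbed_exp_lower_bounds:
  fixes m k t w :: real
  assumes m: "0 < m"
    and bound: "\<And>\<epsilon>. 0 < \<epsilon> \<Longrightarrow> \<epsilon> < m \<Longrightarrow> (m - \<epsilon>) * exp (- (k + \<epsilon>) * t) < w"
  shows "m * exp (- k * t) \<le> w"
proof -
  have "((\<lambda>\<epsilon>. (m - \<epsilon>) * exp (- (k + \<epsilon>) * t)) \<longlongrightarrow> (m - 0) * exp (- (k + 0) * t)) (at_right 0)"
    by (intro tendsto_intros)
  hence lim: "((\<lambda>\<epsilon>. (m - \<epsilon>) * exp (- (k + \<epsilon>) * t)) \<longlongrightarrow> m * exp (- k * t)) (at_right 0)"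
    by simp
  have "eventually (\<lambda>\<epsilon>. (m - \<epsilon>) * exp (- (k + \<epsilon>) * t) \<le> w) (at_right 0)"
    by (rule eventually_at_rightI[OF _ m]) (use bound in \<open>auto intro: less_imp_le\<close>)
  thus ?thesis using tendsto_upperbound[OF lim] by simp
qed

text \<open>The one-dimensional form of the divergence theorem on balls:
  \<open>(r\<^sup>n\<^sup>-\<^sup>1 F)' = r\<^sup>n\<^sup>-\<^sup>1 (F' + (n - 1) F / r)\<close>.\<close>
lemma radial_divergence_has_integral:
  fixes F F' G :: "real \<Rightarrow> real"
  assumes s: "0 < s" and n: "1 \<le> n"
    and cont: "continuous_on {0..s} F" and F0: "F 0 = 0"
    and deriv: "\<And>r. 0 < r \<Longrightarrow> r < s \<Longrightarrow> (F has_real_derivative F' r) (at r)"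
    and eq: "\<And>r. 0 < r \<Longrightarrow> r < s \<Longrightarrow> F' r + (real n - 1) * F r / r = G r"
  shows "((\<lambda>r. r ^ (n - 1) * G r) has_integral s ^ (n - 1) * F s) {0..s}"
proof -
  have "((\<lambda>r. r ^ (n - 1) * G r) has_integral
      ((\<lambda>r. r ^ (n - 1) * F r) s - (\<lambda>r. r ^ (n - 1) * F r) 0)) {0..s}"
  proof (rule fundamental_theorem_of_calculus_interior)
    show "0 \<le> s" using s by simp
    show "continuous_on {0..s} (\<lambda>r. r ^ (n - 1) * F r)"
      by (intro continuous_intros cont)
    fix r assume r: "r \<in> {0<..<s}"
    have d: "((\<lambda>r. r ^ (n - 1) * F r) has_real_derivative
        r ^ (n - 1) * F' r + real (n - 1) * r ^ (n - 1 - Suc 0) * F r) (at r)"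
      using r by (intro DERIV_mult' DERIV_pow deriv) auto
    have pow: "real (n - 1) * r ^ (n - 1 - Suc 0) = (real n - 1) * r ^ (n - 1) / r"
    proof (cases "n - 1")
      case 0 thus ?thesis using n by simp
    next
      case (Suc k)
      hence "real n - 1 = real (Suc k)" using n by linarith
      thus ?thesis using Suc r by simp
    qed
    have "r ^ (n - 1) * F' r + real (n - 1) * r ^ (n - 1 - Suc 0) * F r
        = r ^ (n - 1) * (F' r + (real n - 1) * F r / r)"
      unfolding pow by (simp add: algebra_simps)
    also have "\<dots> = r ^ (n - 1) * G r" using r eq[of r] by simp
    finally have "r ^ (n - 1) * F' r + real (n - 1) * r ^ (n - 1 - Suc 0) * F r = r ^ (n - 1) * G r" .
    thus "((\<lambda>r. r ^ (n - 1) * F r) has_vector_derivative r ^ (n - 1) * G r) (at r)"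
      using d by (simp add: has_real_derivative_iff_has_vector_derivative)
  qed
  thus ?thesis by (simp add: F0)
qed

lemma first_touching_time:
  fixes w :: "'a::metric_space \<Rightarrow> real \<Rightarrow> real"
  assumes K: "compact K" and t1: "0 \<le> t1"
    and cont: "continuous_on (K \<times> {0..t1}) (\<lambda>(x, t). w x t)"
    and touch: "\<exists>x\<in>K. \<exists>t\<in>{0..t1}. w x t \<le> 0" and init: "\<And>x. x \<in> K \<Longrightarrow> w x 0 > 0"
  obtains x ts where "x \<in> K" "0 < ts" "ts \<le> t1" "w x ts = 0"
    "\<And>y. y \<in> K \<Longrightarrow> 0 \<le> w y ts" "\<And>y t. y \<in> K \<Longrightarrow> 0 \<le> t \<Longrightarrow> t < ts \<Longrightarrow> 0 < w y t"
proof -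
  define Z where "Z = (K \<times> {0..t1}) \<inter> (\<lambda>(x, t). w x t) -` {..0}"
  define A where "A = snd ` Z"
  have "closed Z" unfolding Z_def
    by (rule continuous_closed_preimage[OF cont]) (auto intro: closed_Times compact_imp_closed K)
  from compact_Int_closed[OF compact_Times[OF K compact_Icc[of 0 t1]] this]
  have "compact Z" by (metis Int_absorb Int_assoc Z_def)
  hence "compact A" unfolding A_def by (rule compact_continuous_image[OF continuous_on_snd[OF continuous_on_id]])
  moreover have A: "t \<in> A \<longleftrightarrow> t \<in> {0..t1} \<and> (\<exists>x\<in>K. w x t \<le> 0)" for t
    unfolding A_def Z_def by force
  ultimately obtain ts where ts: "ts \<in> A" and ts_min: "\<And>t. t \<in> A \<Longrightarrow> ts \<le> t"
    using compact_attains_inf touch by (metis empty_iff)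
  obtain x where x: "x \<in> K" "w x ts \<le> 0" and ts01: "0 \<le> ts" "ts \<le> t1" using ts A by auto
  have "ts \<noteq> 0" using x init by force
  hence ts0: "0 < ts" using ts01 by simp
  have before: "0 < w y t" if "y \<in> K" "0 \<le> t" "t < ts" for y t
    using that ts_min[of t] A[of t] ts01 by force
  have at: "0 \<le> w y ts" if y: "y \<in> K" for y
  proof (rule continuous_on_Icc_lower_bound[of 0 ts "w y" 0 ts])
    have "continuous_on {0..ts} (\<lambda>t. (\<lambda>(x, t). w x t) (y, t))"
      by (rule continuous_on_compose2[OF cont]) (use y ts01 in \<open>auto intro!: continuous_intros\<close>)
    thus "continuous_on {0..ts} (w y)" by simp
  qed (use before[OF y] ts0 in \<open>auto intro: less_imp_le\<close>)
  show ?thesis using that[OF x(1) ts0 ts01(2) _ at before] x at[OF x(1)] by linarith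
qed

section \<open>Radially symmetric functions on balls\<close>

lemma sphere_curve_with_tangent:
  fixes y w :: "real^'n"
  assumes "y \<noteq> 0" "w \<noteq> 0" "w \<bullet> y = 0"
  obtains c :: "real \<Rightarrow> real^'n" and k :: real
  where "k > 0" "c 0 = y" "\<And>\<theta>. norm (c \<theta>) = norm y"
    "(c has_derivative (\<lambda>\<theta>. \<theta> *\<^sub>R (k *\<^sub>R w))) (at 0)"
proof -
  define k where "k = norm y / norm w"
  have k: "k > 0" using assms by (simp add: k_def)
  have kw: "k\<^sup>2 * (w \<bullet> w) = y \<bullet> y"
    using assms by (simp add: k_def power2_norm_eq_inner[symmetric] power_divide)
  define c where "c = (\<lambda>\<theta>::real. cos \<theta> *\<^sub>R y + (sin \<theta> * k) *\<^sub>R w)"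
  have "norm (c \<theta>) = norm y" for \<theta>
  proof -
    have yw: "y \<bullet> w = 0" using assms by (simp add: inner_commute)
    have "c \<theta> \<bullet> c \<theta> = (cos \<theta>)\<^sup>2 * (y \<bullet> y) + (sin \<theta> * k)\<^sup>2 * (w \<bullet> w)
        + 2 * (cos \<theta> * (sin \<theta> * k)) * (y \<bullet> w)"
      unfolding c_def
      by (simp add: inner_add_left inner_add_right inner_commute power2_eq_square algebra_simps)
    also have "\<dots> = (cos \<theta>)\<^sup>2 * (y \<bullet> y) + (sin \<theta>)\<^sup>2 * (k\<^sup>2 * (w \<bullet> w))"
      using yw by (simp add: power_mult_distrib)
    also have "\<dots> = ((cos \<theta>)\<^sup>2 + (sin \<theta>)\<^sup>2) * (y \<bullet> y)" by (simp only: kw distrib_right)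
    finally have "(norm (c \<theta>))\<^sup>2 = (norm y)\<^sup>2" by (simp add: power2_norm_eq_inner)
    thus ?thesis by (simp add: power2_eq_iff_nonneg)
  qed
  moreover have "(c has_derivative (\<lambda>\<theta>. \<theta> *\<^sub>R (k *\<^sub>R w))) (at 0)"
    unfolding c_def by (auto intro!: derivative_eq_intros)
  ultimately show ?thesis using k that[of k c] by (simp add: c_def)
qed

lemma radial_gradient_orthogonal:
  fixes f :: "real^'n \<Rightarrow> real"
  assumes rad: "radial f" and y: "y \<in> cball 0 R" "y \<noteq> 0"
    and df: "(f has_derivative (\<lambda>h. g \<bullet> h)) (at y within cball 0 R)"
    and wy: "w \<bullet> y = 0"
  shows "g \<bullet> w = 0"
proof (cases "w = 0")
  case False
  obtain c k where k: "k > 0" and c0: "c 0 = y" and nc: "\<And>\<theta>. norm (c \<theta>) = norm y"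
    and dc: "(c has_derivative (\<lambda>\<theta>. \<theta> *\<^sub>R (k *\<^sub>R w))) (at 0)"
    using sphere_curve_with_tangent[OF y(2) False wy] by blast
  have sub: "range c \<subseteq> cball 0 R" using nc y by auto
  have "f (c \<theta>) = f y" for \<theta> using rad nc unfolding radial_def by blast
  hence fc: "f \<circ> c = (\<lambda>_. f y)" by (simp add: fun_eq_iff)
  have "((\<lambda>_. f y) has_derivative ((\<lambda>h. g \<bullet> h) \<circ> (\<lambda>\<theta>. \<theta> *\<^sub>R (k *\<^sub>R w)))) (at 0)"
    using diff_chain_within[OF dc has_derivative_subset[OF df[folded c0] sub]] unfolding fc .
  hence "(\<lambda>h. g \<bullet> h) \<circ> (\<lambda>\<theta>. \<theta> *\<^sub>R (k *\<^sub>R w)) = (\<lambda>_. 0)"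
    by (rule has_derivative_unique[OF _ has_derivative_const])
  hence "((\<lambda>h. g \<bullet> h) \<circ> (\<lambda>\<theta>. \<theta> *\<^sub>R (k *\<^sub>R w))) 1 = 0" by (rule fun_cong)
  hence "k * (g \<bullet> w) = 0" by simp
  thus ?thesis using k by simp
qed simp

lemma radial_gradient_parallel:
  fixes f :: "real^'n \<Rightarrow> real"
  assumes rad: "radial f" and y: "y \<in> cball 0 R" "y \<noteq> 0"
    and df: "(f has_derivative (\<lambda>h. g \<bullet> h)) (at y within cball 0 R)"
  shows "g = ((g \<bullet> y) / (y \<bullet> y)) *\<^sub>R y"
proof -
  define w where "w = g - ((g \<bullet> y) / (y \<bullet> y)) *\<^sub>R y"
  have wy: "w \<bullet> y = 0" using y by (simp add: w_def inner_diff_left)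
  have "w \<bullet> w = g \<bullet> w - ((g \<bullet> y) / (y \<bullet> y)) * (y \<bullet> w)"
    by (simp add: w_def inner_diff_left)
  also have "\<dots> = 0"
    using radial_gradient_orthogonal[OF rad y df wy] wy by (simp add: inner_commute)
  finally show ?thesis by (simp add: w_def)
qed

lemma radial_gradient_at_0:
  fixes f :: "real^'n \<Rightarrow> real"
  assumes rad: "radial f" and R: "R > 0"
    and df: "(f has_derivative (\<lambda>h. g \<bullet> h)) (at 0 within cball 0 R)"
  shows "g = 0"
proof -
  have "at (0::real^'n) within cball 0 R = at 0"
    using R by (intro at_within_interior) simp
  hence df': "(f has_derivative (\<lambda>h. g \<bullet> h)) (at 0)" using df by simp
  have "f (- y) = f y" for y
    using rad norm_minus_cancel[of y] unfolding radial_def by blast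
  hence f_neg: "(\<lambda>y. f (- y)) = f" by (rule ext)
  have "(f has_derivative (\<lambda>h. g \<bullet> h)) (at (- 0))" using df' by simp
  from has_derivative_compose[OF has_derivative_minus[OF has_derivative_ident] this]
  have "(f has_derivative (\<lambda>h. g \<bullet> (- h))) (at 0)" unfolding f_neg .
  hence "(\<lambda>h. g \<bullet> (- h)) = (\<lambda>h. g \<bullet> h)" using df' by (rule has_derivative_unique)
  hence "g \<bullet> (- g) = g \<bullet> g" by (rule fun_cong)
  thus ?thesis by simp
qed

lemma has_real_derivative_along_ray:
  fixes f :: "real^'n \<Rightarrow> real"
  assumes df: "(f has_derivative f') (at (s *\<^sub>R e) within S)"
    and ray: "\<And>s'. s' \<in> X \<Longrightarrow> s' *\<^sub>R e \<in> S"
  shows "((\<lambda>s. f (s *\<^sub>R e)) has_real_derivative f' e) (at s within X)"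
proof -
  have l: "((\<lambda>s::real. s *\<^sub>R e) has_derivative (\<lambda>h. h *\<^sub>R e)) (at s within X)"
    by (intro derivative_eq_intros) auto
  have sub: "(\<lambda>s. s *\<^sub>R e) ` X \<subseteq> S" using ray by auto
  have "((f \<circ> (\<lambda>s. s *\<^sub>R e)) has_derivative (f' \<circ> (\<lambda>h. h *\<^sub>R e))) (at s within X)"
    using diff_chain_within[OF l has_derivative_subset[OF df sub]] .
  moreover have "f' \<circ> (\<lambda>h. h *\<^sub>R e) = (*) (f' e)"
    using linear_cmul[OF has_derivative_linear[OF df]] by (simp add: fun_eq_iff mult.commute)
  ultimately show ?thesis by (simp add: has_field_derivative_def o_def)
qed

lemma has_real_derivative_along_ray_component:
  fixes F :: "real^'n \<Rightarrow> real^'n"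
  assumes dF: "(F has_derivative (\<lambda>h. H *v h)) (at (s *\<^sub>R e) within S)"
    and ray: "\<And>s'. s' \<in> X \<Longrightarrow> s' *\<^sub>R e \<in> S"
  shows "((\<lambda>s. F (s *\<^sub>R e) \<bullet> e) has_real_derivative ((H *v e) \<bullet> e)) (at s within X)"
  using has_real_derivative_along_ray[OF bounded_linear.has_derivative[OF bounded_linear_inner_left dF] ray] .

lemma radial_gradient_eq:
  fixes f :: "real^'n \<Rightarrow> real" and G :: "real^'n \<Rightarrow> real^'n"
  assumes rad: "radial f" and R: "R > 0"
    and df: "\<And>z. z \<in> cball 0 R \<Longrightarrow> (f has_derivative (\<lambda>h. G z \<bullet> h)) (at z within cball 0 R)"
    and y: "y \<in> cball 0 R" "y \<noteq> 0" and e: "norm e = 1"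
  shows "G y = ((G (norm y *\<^sub>R e) \<bullet> e) / norm y) *\<^sub>R y"
proof -
  define d where "d = y /\<^sub>R norm y"
  have nd: "norm d = 1" using y by (simp add: d_def)
  have ny: "norm y \<in> {0..R}" using y by auto
  have ray: "\<And>s. s \<in> {0..R} \<Longrightarrow> s *\<^sub>R d \<in> cball 0 R" "\<And>s. s \<in> {0..R} \<Longrightarrow> s *\<^sub>R e \<in> cball 0 R"
    using nd e by auto
  have "(f has_derivative (\<lambda>h. G y \<bullet> h)) (at (norm y *\<^sub>R d) within cball 0 R)"
    using df[OF y(1)] y by (simp add: d_def)
  hence "((\<lambda>s. f (s *\<^sub>R d)) has_real_derivative (G y \<bullet> d)) (at (norm y) within {0..R})"
    by (rule has_real_derivative_along_ray[OF _ ray(1)])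
  moreover have "(\<lambda>s. f (s *\<^sub>R d)) = (\<lambda>s. f (s *\<^sub>R e))"
  proof
    fix s
    have "norm (s *\<^sub>R d) = norm (s *\<^sub>R e)" using nd e by simp
    thus "f (s *\<^sub>R d) = f (s *\<^sub>R e)" using rad unfolding radial_def by blast
  qed
  ultimately have d1: "((\<lambda>s. f (s *\<^sub>R e)) has_real_derivative (G y \<bullet> d)) (at (norm y) within {0..R})"
    by simp
  have d2: "((\<lambda>s. f (s *\<^sub>R e)) has_real_derivative (G (norm y *\<^sub>R e) \<bullet> e)) (at (norm y) within {0..R})"
    by (rule has_real_derivative_along_ray[OF df ray(2)]) (use ray(2)[OF ny] in simp)
  have "G y \<bullet> d = G (norm y *\<^sub>R e) \<bullet> e" using real_derivative_unique_Icc[OF R ny d1 d2] .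
  hence "G y \<bullet> y = norm y * (G (norm y *\<^sub>R e) \<bullet> e)"
    using y by (simp add: d_def field_simps)
  moreover have "y \<bullet> y = norm y * norm y" by (simp flip: power2_eq_square power2_norm_eq_inner)
  ultimately show ?thesis using radial_gradient_parallel[OF rad y df[OF y(1)]] y by simp
qed

lemma radial_gradient_on_ray:
  fixes f :: "real^'n \<Rightarrow> real" and G :: "real^'n \<Rightarrow> real^'n"
  assumes rad: "radial f" and R: "R > 0"
    and df: "\<And>z. z \<in> cball 0 R \<Longrightarrow> (f has_derivative (\<lambda>h. G z \<bullet> h)) (at z within cball 0 R)"
    and s: "\<bar>s\<bar> \<le> R" and e: "norm e = 1"
  shows "G (s *\<^sub>R e) = (G (s *\<^sub>R e) \<bullet> e) *\<^sub>R e"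
proof (cases "s = 0")
  case True
  have "G 0 = 0" by (rule radial_gradient_at_0[OF rad R df]) (use R in simp)
  thus ?thesis using True by simp
next
  case False
  have y: "s *\<^sub>R e \<in> cball 0 R" "s *\<^sub>R e \<noteq> 0" using s e False by auto
  show ?thesis
    using radial_gradient_parallel[OF rad y df[OF y(1)]] False e
    by (simp add: power2_norm_eq_inner[symmetric] power2_eq_square)
qed

lemma has_derivative_radial_field:
  fixes \<phi> :: "real \<Rightarrow> real" and x :: "real^'n"
  assumes x: "x \<noteq> 0" and d\<phi>: "(\<phi> has_real_derivative \<phi>') (at (norm x))"
  shows "((\<lambda>y. (\<phi> (norm y) / norm y) *\<^sub>R y) has_derivative
           (\<lambda>h. ((\<phi>' - \<phi> (norm x) / norm x) / (norm x)\<^sup>2 * (x \<bullet> h)) *\<^sub>R x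
                 + (\<phi> (norm x) / norm x) *\<^sub>R h)) (at x)"
proof -
  have N: "(norm has_derivative (\<lambda>h. h \<bullet> sgn x)) (at x)" using has_derivative_norm[OF x] .
  have P: "((\<lambda>y. \<phi> (norm y)) has_derivative (\<lambda>h. \<phi>' * (h \<bullet> sgn x))) (at x)"
    using has_derivative_compose[OF N d\<phi>[unfolded has_field_derivative_def]] .
  have "((\<lambda>y. (\<phi> (norm y) / norm y) *\<^sub>R y) has_derivative
      (\<lambda>h. (\<phi> (norm x) / norm x) *\<^sub>R h +
         ((\<phi>' * (h \<bullet> sgn x) * norm x - \<phi> (norm x) * (h \<bullet> sgn x)) / (norm x * norm x)) *\<^sub>R x)) (at x)"
    using has_derivative_scaleR[OF has_derivative_divide'[OF P N] has_derivative_ident] x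
    by (simp add: inverse_eq_divide)
  moreover have "h \<bullet> sgn x = (x \<bullet> h) / norm x" for h
    by (simp add: sgn_div_norm inner_commute divide_inverse mult.commute)
  ultimately show ?thesis
    using x by (simp add: field_simps power2_eq_square)
qed

lemma trace_derivative_radial_field:
  fixes F :: "real^'n \<Rightarrow> real^'n" and \<phi> :: "real \<Rightarrow> real"
  assumes x: "x \<noteq> 0" and U: "open U" "x \<in> U"
    and FU: "\<And>y. y \<in> U \<Longrightarrow> F y = (\<phi> (norm y) / norm y) *\<^sub>R y"
    and d\<phi>: "(\<phi> has_real_derivative \<phi>') (at (norm x))"
    and dF: "(F has_derivative DF) (at x)"
  shows "(\<Sum>i\<in>UNIV. DF (axis i 1) $ i) = \<phi>' + (real CARD('n) - 1) * \<phi> (norm x) / norm x"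
proof -
  define r where "r = norm x"
  define q where "q = \<phi> r / r"
  have r: "r > 0" using x by (simp add: r_def)
  have "(F has_derivative (\<lambda>h. ((\<phi>' - q) / r\<^sup>2 * (x \<bullet> h)) *\<^sub>R x + q *\<^sub>R h)) (at x)"
    using has_derivative_radial_field[OF x d\<phi>] unfolding q_def r_def
    by (rule has_derivative_transform_within_open[OF _ U]) (simp add: FU)
  hence DF: "DF = (\<lambda>h. ((\<phi>' - q) / r\<^sup>2 * (x \<bullet> h)) *\<^sub>R x + q *\<^sub>R h)"
    by (rule has_derivative_unique[OF dF])
  have xx: "(\<Sum>i\<in>UNIV. x $ i * x $ i) = r\<^sup>2"
    by (simp add: r_def power2_norm_eq_inner inner_vec_def)
  have "(\<Sum>i\<in>UNIV. DF (axis i 1) $ i) = (\<Sum>i\<in>UNIV. (\<phi>' - q) / r\<^sup>2 * (x $ i * x $ i) + q)"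
    unfolding DF by (intro sum.cong) (simp_all add: inner_axis)
  also have "\<dots> = (\<phi>' - q) / r\<^sup>2 * r\<^sup>2 + real CARD('n) * q"
    unfolding sum.distrib sum_distrib_left[symmetric] xx by simp
  also have "(\<phi>' - q) / r\<^sup>2 * r\<^sup>2 = \<phi>' - q" using r by simp
  also have "\<phi>' - q + real CARD('n) * q = \<phi>' + (real CARD('n) - 1) * q" by (simp add: algebra_simps)
  finally show ?thesis by (simp add: q_def r_def)
qed

lemma sum_matrix_vector_axis: "(\<Sum>i\<in>UNIV. ((M::real^'n^'n) *v axis i 1) $ i) = (\<Sum>i\<in>UNIV. M $ i $ i)"
  by (simp add: matrix_vector_mult_basis column_def)

lemma matrix_vector_axis_inner: "((M::real^'n^'n) *v axis i 1) \<bullet> axis i 1 = M $ i $ i"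
  by (simp add: inner_axis matrix_vector_mult_basis column_def)

lemma matrix_vector_inner_eq_sum:
  "((M::real^'n^'n) *v e) \<bullet> e = (\<Sum>i\<in>UNIV. \<Sum>j\<in>UNIV. M $ i $ j * e $ j * e $ i)"
  by (simp add: matrix_vector_mult_def inner_vec_def sum_distrib_right)

lemma continuous_on_matrix_quadratic_form:
  fixes M :: "'a::topological_space \<Rightarrow> real^'n^'n"
  assumes "continuous_on S M"
  shows "continuous_on S (\<lambda>s. (M s *v e) \<bullet> e)"
  unfolding matrix_vector_inner_eq_sum
  by (intro continuous_intros continuous_on_component assms)

section \<open>The flux in radial coordinates\<close>

definition radial_flux :: "real \<Rightarrow> real \<Rightarrow> real \<Rightarrow> real \<Rightarrow> real" where
  "radial_flux chi U B A = U * B / sqrt (U\<^sup>2 + B\<^sup>2) - chi * (U * A) / sqrt (1 + A\<^sup>2)"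

text \<open>The derivative of \<open>radial_flux\<close> along a curve with \<open>(U, B, A)' = (B, B', A')\<close>,
  in the unsimplified form produced by the quotient rule.\<close>
definition radial_flux_deriv :: "real \<Rightarrow> real \<Rightarrow> real \<Rightarrow> real \<Rightarrow> real \<Rightarrow> real \<Rightarrow> real" where
  "radial_flux_deriv chi U B B' A A' =
     ((U * B' + B * B) * sqrt (U\<^sup>2 + B\<^sup>2)
        - U * B * (inverse (sqrt (U\<^sup>2 + B\<^sup>2)) / 2 * (2 * U * B + 2 * B * B')))
       / (sqrt (U\<^sup>2 + B\<^sup>2) * sqrt (U\<^sup>2 + B\<^sup>2))
   - (chi * (U * A' + B * A) * sqrt (1 + A\<^sup>2)
        - chi * (U * A) * (inverse (sqrt (1 + A\<^sup>2)) / 2 * (2 * A * A')))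
       / (sqrt (1 + A\<^sup>2) * sqrt (1 + A\<^sup>2))"

lemma sqrt_sum_squares_pos: "U > 0 \<Longrightarrow> sqrt (U\<^sup>2 + B\<^sup>2) > (0::real)"
  by (simp add: add_pos_nonneg)

lemma sqrt_one_plus_square_pos: "sqrt (1 + A\<^sup>2) > (0::real)"
  by (simp add: add_pos_nonneg)

lemma has_real_derivative_radial_flux:
  assumes dU: "(U has_real_derivative B s) (at s within S)"
    and dB: "(B has_real_derivative B') (at s within S)"
    and dA: "(A has_real_derivative A') (at s within S)"
    and U: "U s > 0"
  shows "((\<lambda>s. radial_flux chi (U s) (B s) (A s)) has_real_derivative
           radial_flux_deriv chi (U s) (B s) B' (A s) A') (at s within S)"
proof -
  have pN: "(U s)\<^sup>2 + (B s)\<^sup>2 > 0" and pM: "1 + (A s)\<^sup>2 > 0"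
    using U by (simp_all add: add_pos_nonneg)
  have "((\<lambda>s. (U s)\<^sup>2 + (B s)\<^sup>2) has_real_derivative 2 * U s * B s + 2 * B s * B') (at s within S)"
    using dU dB by (auto intro!: derivative_eq_intros)
  from DERIV_chain2[OF DERIV_real_sqrt[OF pN] this]
  have N: "((\<lambda>s. sqrt ((U s)\<^sup>2 + (B s)\<^sup>2)) has_real_derivative
      inverse (sqrt ((U s)\<^sup>2 + (B s)\<^sup>2)) / 2 * (2 * U s * B s + 2 * B s * B')) (at s within S)" .
  have "((\<lambda>s. 1 + (A s)\<^sup>2) has_real_derivative 2 * A s * A') (at s within S)"
    using dA by (auto intro!: derivative_eq_intros)
  from DERIV_chain2[OF DERIV_real_sqrt[OF pM] this]
  have M: "((\<lambda>s. sqrt (1 + (A s)\<^sup>2)) has_real_derivative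
      inverse (sqrt (1 + (A s)\<^sup>2)) / 2 * (2 * A s * A')) (at s within S)" .
  have P: "((\<lambda>s. U s * B s) has_real_derivative U s * B' + B s * B s) (at s within S)"
    using DERIV_mult'[OF dU dB] .
  have Q: "((\<lambda>s. chi * (U s * A s)) has_real_derivative chi * (U s * A' + B s * A s)) (at s within S)"
    using DERIV_cmult[OF DERIV_mult'[OF dU dA]] .
  have "sqrt ((U s)\<^sup>2 + (B s)\<^sup>2) \<noteq> 0" "sqrt (1 + (A s)\<^sup>2) \<noteq> 0" using pN pM by auto
  from DERIV_diff[OF DERIV_divide[OF P N this(1)] DERIV_divide[OF Q M this(2)]]
  show ?thesis unfolding radial_flux_def radial_flux_deriv_def .
qed

lemma continuous_on_radial_flux:
  assumes "continuous_on S U" "continuous_on S B" "continuous_on S A" "\<And>s. s \<in> S \<Longrightarrow> U s > 0"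
  shows "continuous_on S (\<lambda>s. radial_flux chi (U s) (B s) (A s))"
  unfolding radial_flux_def
  using assms sqrt_sum_squares_pos sqrt_one_plus_square_pos
  by (intro continuous_intros) (auto simp: less_imp_neq[symmetric])

lemma continuous_on_radial_flux_deriv:
  assumes "continuous_on S U" "continuous_on S B" "continuous_on S B'"
    "continuous_on S A" "continuous_on S A'" "\<And>s. s \<in> S \<Longrightarrow> U s > 0"
  shows "continuous_on S (\<lambda>s. radial_flux_deriv chi (U s) (B s) (B' s) (A s) (A' s))"
  unfolding radial_flux_deriv_def
  using assms sqrt_sum_squares_pos sqrt_one_plus_square_pos
  by (intro continuous_intros) (auto simp: less_imp_neq[symmetric])

lemma radial_flux_deriv_at_critical:
  assumes U: "U > 0"
  shows "radial_flux_deriv chi U 0 B' A A' = B' - chi * U * A' / (sqrt (1 + A\<^sup>2))^3"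
proof -
  define M where "M = sqrt (1 + A\<^sup>2)"
  have M: "M > 0" "M\<^sup>2 = 1 + A\<^sup>2" by (auto simp: M_def add_pos_nonneg)
  have "radial_flux_deriv chi U 0 B' A A'
      = U * B' * U / (U * U) - chi * U * A' * (M\<^sup>2 - A\<^sup>2) / M^3"
    unfolding radial_flux_deriv_def M_def[symmetric] using U M(1)
    by (simp add: field_simps power2_eq_square power3_eq_cube)
  also have "M\<^sup>2 - A\<^sup>2 = 1" using M by simp
  finally show ?thesis using U by (simp add: M_def)
qed

lemma radial_flux_no_gradients:
  assumes "U > 0" "chi > 0" "radial_flux chi U B A = 0" "B = 0 \<or> A = 0"
  shows "B = 0 \<and> A = 0"
  using assms sqrt_sum_squares_pos[of U B] sqrt_one_plus_square_pos[of A]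
  by (auto simp: radial_flux_def)

lemma square_div_cube_sqrt_le: "(A::real)\<^sup>2 / (sqrt (1 + A\<^sup>2))^3 \<le> 2 / (3 * sqrt 3)"
proof -
  define M where "M = sqrt (1 + A\<^sup>2)"
  have M: "M > 0" "M\<^sup>2 = 1 + A\<^sup>2" by (auto simp: M_def add_pos_nonneg)
  have "(3 * sqrt 3 * A\<^sup>2)\<^sup>2 = 27 * (A\<^sup>2)\<^sup>2" by (simp add: power_mult_distrib)
  also have "27 * (A\<^sup>2)\<^sup>2 \<le> 4 * (1 + A\<^sup>2)^3"
  proof -
    have "4 * (1 + A\<^sup>2)^3 - 27 * (A\<^sup>2)\<^sup>2 = (A\<^sup>2 - 2)\<^sup>2 * (4 * A\<^sup>2 + 1)"
      by (simp add: algebra_simps power2_eq_square power3_eq_cube)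
    thus ?thesis by (metis diff_ge_0_iff_ge zero_le_mult_iff zero_le_power2 add_nonneg_nonneg
        mult_nonneg_nonneg zero_le_one zero_le_numeral)
  qed
  also have "4 * (1 + A\<^sup>2)^3 = (2 * M^3)\<^sup>2"
    by (simp add: power_mult_distrib M(2)[symmetric] power_mult[symmetric] mult.commute[of 3 2])
  finally have "3 * sqrt 3 * A\<^sup>2 \<le> 2 * M^3"
    by (rule power2_le_imp_le) (use M in simp)
  thus ?thesis unfolding M_def[symmetric] using M(1) by (simp add: field_simps)
qed

lemma nonlinear_chemotactic_term_le:
  fixes A r mu n :: real
  assumes mu: "mu \<ge> 0" and r: "r > 0" and n: "n \<ge> 1" and A: "A \<le> mu * r / n"
  shows "(n - 1) * (A / r) * (A\<^sup>2 / (sqrt (1 + A\<^sup>2))^3) \<le> (n - 1) * (mu / n) * (2 / (3 * sqrt 3))"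
proof (cases "A \<ge> 0")
  case True
  have "A / r \<le> mu / n" using A r n by (simp add: divide_le_eq field_simps)
  hence "(A / r) * (A\<^sup>2 / (sqrt (1 + A\<^sup>2))^3) \<le> (mu / n) * (2 / (3 * sqrt 3))"
    using True r mu n square_div_cube_sqrt_le[of A] by (intro mult_mono) auto
  hence "(n - 1) * ((A / r) * (A\<^sup>2 / (sqrt (1 + A\<^sup>2))^3)) \<le> (n - 1) * ((mu / n) * (2 / (3 * sqrt 3)))"
    using n by (intro mult_left_mono) auto
  thus ?thesis by (simp only: mult.assoc)
next
  case False
  hence "(n - 1) * (A / r) * (A\<^sup>2 / (sqrt (1 + A\<^sup>2))^3) \<le> 0"
    using n r by (intro mult_nonpos_nonneg mult_nonneg_nonpos) (auto simp: divide_nonpos_pos)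
  also have "0 \<le> (n - 1) * (mu / n) * (2 / (3 * sqrt 3))" using n mu by simp
  finally show ?thesis .
qed

text \<open>Eliminating \<open>A'\<close> by the elliptic equation leaves
  \<open>(\<mu> - U) / M\<^sup>3 + (n - 1) (A / r) (A\<^sup>2 / M\<^sup>3)\<close> with \<open>M = \<surd>(1 + A\<^sup>2)\<close>.\<close>
lemma chemotactic_term_le:
  fixes U A A' r mu n :: real
  assumes U: "U > 0" and mu: "mu \<ge> 0" and r: "r > 0" and n: "n \<ge> 1"
    and A: "A \<le> mu * r / n" and A': "A' + (n - 1) * A / r = mu - U"
  shows "A' / (sqrt (1 + A\<^sup>2))^3 + (n - 1) * (A / r) / sqrt (1 + A\<^sup>2)
           \<le> mu + 2 * (n - 1) * mu / (3 * sqrt 3 * n)"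
proof -
  define M where "M = sqrt (1 + A\<^sup>2)"
  have M: "M > 0" "M\<^sup>2 = 1 + A\<^sup>2" "M^3 \<ge> 1" by (auto simp: M_def add_pos_nonneg one_le_power)
  have "1 / M - 1 / M^3 = (M\<^sup>2 - 1) / M^3"
    using M(1) by (simp add: field_simps power2_eq_square power3_eq_cube)
  hence M_diff: "1 / M - 1 / M^3 = A\<^sup>2 / M^3" using M(2) by simp
  have "A' / M^3 + (n - 1) * (A / r) / M = (mu - U - (n - 1) * A / r) / M^3 + (n - 1) * (A / r) / M"
    using A' by (simp add: algebra_simps)
  also have "\<dots> = (mu - U) / M^3 + (n - 1) * (A / r) * (1 / M - 1 / M^3)"
    using M(1) r by (simp add: field_simps)
  also have "\<dots> = (mu - U) / M^3 + (n - 1) * (A / r) * (A\<^sup>2 / M^3)"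
    unfolding M_diff ..
  also have "(mu - U) / M^3 \<le> mu"
  proof (cases "mu - U \<ge> 0")
    case True
    hence "(mu - U) / M^3 \<le> (mu - U) / 1" using M(1,3) by (intro divide_left_mono) auto
    thus ?thesis using U by simp
  next
    case False
    hence "(mu - U) / M^3 \<le> 0" using M(1) by (intro divide_nonpos_pos) auto
    thus ?thesis using mu by linarith
  qed
  also have "(n - 1) * (A / r) * (A\<^sup>2 / M^3) \<le> (n - 1) * (mu / n) * (2 / (3 * sqrt 3))"
    using nonlinear_chemotactic_term_le[OF mu r n A] unfolding M_def .
  also have "mu + (n - 1) * (mu / n) * (2 / (3 * sqrt 3)) = mu + 2 * (n - 1) * mu / (3 * sqrt 3 * n)"
    by (simp add: field_simps)
  finally show ?thesis unfolding M_def by simp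
qed

lemma radial_divergence_at_critical_point_ge:
  fixes U A A' B' r mu chi n :: real
  assumes U: "U > 0" and chi: "chi > 0" and mu: "mu \<ge> 0" and r: "r > 0" and n: "n \<ge> 1"
    and A: "A \<le> mu * r / n" and B': "B' \<ge> 0" and A': "A' + (n - 1) * A / r = mu - U"
  shows "radial_flux_deriv chi U 0 B' A A' + (n - 1) * radial_flux chi U 0 A / r
           \<ge> - (chi * mu + 2 * (n - 1) * chi * mu / (3 * sqrt 3 * n)) * U"
proof -
  define M where "M = sqrt (1 + A\<^sup>2)"
  have "radial_flux_deriv chi U 0 B' A A' + (n - 1) * radial_flux chi U 0 A / r
      = B' - chi * U * (A' / M^3 + (n - 1) * (A / r) / M)"
    using U by (simp add: radial_flux_deriv_at_critical radial_flux_def M_def field_simps)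
  also have "\<dots> \<ge> B' - chi * U * (mu + 2 * (n - 1) * mu / (3 * sqrt 3 * n))"
    using chemotactic_term_le[OF U mu r n A A'] chi U unfolding M_def
    by (intro diff_left_mono mult_left_mono) auto
  finally show ?thesis using B' by (simp add: algebra_simps)
qed

lemma divergence_flux_at_critical_point:
  fixes U :: "real^'n \<Rightarrow> real" and GU GV :: "real^'n \<Rightarrow> real^'n"
  assumes dU: "(U has_derivative (\<lambda>h. GU x \<bullet> h)) (at x)"
    and dGU: "(GU has_derivative (\<lambda>h. HU *v h)) (at x)"
    and dGV: "(GV has_derivative (\<lambda>h. HV *v h)) (at x)"
    and crit: "GU x = 0" "GV x = 0" and pos: "U x > 0"
    and div: "has_divergence (\<lambda>y. flux chi (U y) (GU y) (GV y)) d x"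
  shows "d = (\<Sum>i\<in>UNIV. HU $ i $ i) - chi * U x * (\<Sum>i\<in>UNIV. HV $ i $ i)"
proof -
  define \<alpha> where "\<alpha> = (\<lambda>y. U y / sqrt ((U y)\<^sup>2 + GU y \<bullet> GU y))"
  define \<beta> where "\<beta> = (\<lambda>y. chi * U y / sqrt (1 + GV y \<bullet> GV y))"
  have p1: "0 < (U x)\<^sup>2 + GU x \<bullet> GU x" and p2: "0 < 1 + GV x \<bullet> GV x"
    using pos by (simp_all add: crit)
  have "sqrt ((U x)\<^sup>2 + GU x \<bullet> GU x) \<noteq> 0" "sqrt (1 + GV x \<bullet> GV x) \<noteq> 0"
    using p1 p2 by auto
  note dN = has_derivative_add[OF has_derivative_power[OF dU, of 2] has_derivative_inner[OF dGU dGU]]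
  note dM = has_derivative_add[OF has_derivative_const[of 1] has_derivative_inner[OF dGV dGV]]
  note d\<alpha> = has_derivative_divide[OF dU has_derivative_real_sqrt[OF p1 dN] \<open>sqrt ((U x)\<^sup>2 + GU x \<bullet> GU x) \<noteq> 0\<close>]
  note d\<beta> = has_derivative_divide[OF bounded_linear.has_derivative[OF bounded_linear_mult_right dU]
      has_derivative_real_sqrt[OF p2 dM] \<open>sqrt (1 + GV x \<bullet> GV x) \<noteq> 0\<close>]
  obtain D\<alpha> where D\<alpha>: "(\<alpha> has_derivative D\<alpha>) (at x)" unfolding \<alpha>_def using d\<alpha> by blast
  obtain D\<beta> where D\<beta>: "(\<beta> has_derivative D\<beta>) (at x)" unfolding \<beta>_def using d\<beta> by blast
  have "(\<lambda>y. flux chi (U y) (GU y) (GV y)) = (\<lambda>y. \<alpha> y *\<^sub>R GU y - \<beta> y *\<^sub>R GV y)"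
    by (simp add: fun_eq_iff flux_def \<alpha>_def \<beta>_def power2_norm_eq_inner)
  hence "((\<lambda>y. flux chi (U y) (GU y) (GV y)) has_derivative
      (\<lambda>h. (\<alpha> x *\<^sub>R (HU *v h) + D\<alpha> h *\<^sub>R GU x) - (\<beta> x *\<^sub>R (HV *v h) + D\<beta> h *\<^sub>R GV x))) (at x)"
    using D\<alpha> D\<beta> dGU dGV by (auto intro!: has_derivative_diff has_derivative_scaleR)
  moreover obtain DG where DG: "((\<lambda>y. flux chi (U y) (GU y) (GV y)) has_derivative DG) (at x)"
    and d: "d = (\<Sum>i\<in>UNIV. DG (axis i 1) $ i)"
    using div unfolding has_divergence_def by blast
  ultimately have "DG = (\<lambda>h. HU *v h - (chi * U x) *\<^sub>R (HV *v h))"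
    using pos by (auto simp: crit \<alpha>_def \<beta>_def dest: has_derivative_unique)
  thus ?thesis unfolding d
    by (simp add: sum_subtractf sum_distrib_left sum_matrix_vector_axis flip: sum_matrix_vector_axis)
qed

section \<open>Radial classical solutions\<close>

locale radial_classical_solution =
  fixes R chi mu :: real and T :: ereal
    and u0 :: "real^'n \<Rightarrow> real"
    and u v ut :: "real^'n \<Rightarrow> real \<Rightarrow> real"
    and gu gv :: "real^'n \<Rightarrow> real \<Rightarrow> real^'n"
    and Hu Hv :: "real^'n \<Rightarrow> real \<Rightarrow> real^'n^'n"
  assumes R: "R > 0" and chi: "chi > 0" and T: "0 < T"
    and cu: "continuous_on {(x,t). x \<in> cball 0 R \<and> 0 \<le> t \<and> ereal t < T} (\<lambda>(x,t). u x t)"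
    and cgu: "continuous_on {(x,t). x \<in> cball 0 R \<and> 0 \<le> t \<and> ereal t < T} (\<lambda>(x,t). gu x t)"
    and cHu: "continuous_on {(x,t). x \<in> cball 0 R \<and> 0 \<le> t \<and> ereal t < T} (\<lambda>(x,t). Hu x t)"
    and cut: "continuous_on {(x,t). x \<in> cball 0 R \<and> 0 \<le> t \<and> ereal t < T} (\<lambda>(x,t). ut x t)"
    and cgv: "continuous_on {(x,t). x \<in> cball 0 R \<and> 0 \<le> t \<and> ereal t < T} (\<lambda>(x,t). gv x t)"
    and cHv: "continuous_on {(x,t). x \<in> cball 0 R \<and> 0 \<le> t \<and> ereal t < T} (\<lambda>(x,t). Hv x t)"
    and du: "\<And>x t. x \<in> cball 0 R \<Longrightarrow> 0 \<le> t \<Longrightarrow> ereal t < T \<Longrightarrow>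
               ((\<lambda>y. u y t) has_derivative (\<lambda>h. gu x t \<bullet> h)) (at x within cball 0 R)"
    and dgu: "\<And>x t. x \<in> cball 0 R \<Longrightarrow> 0 \<le> t \<Longrightarrow> ereal t < T \<Longrightarrow>
               ((\<lambda>y. gu y t) has_derivative (\<lambda>h. Hu x t *v h)) (at x within cball 0 R)"
    and dut: "\<And>x t. x \<in> cball 0 R \<Longrightarrow> 0 \<le> t \<Longrightarrow> ereal t < T \<Longrightarrow>
               ((\<lambda>s. u x s) has_real_derivative ut x t) (at t within {t. 0 \<le> t \<and> ereal t < T})"
    and dv: "\<And>x t. x \<in> cball 0 R \<Longrightarrow> 0 \<le> t \<Longrightarrow> ereal t < T \<Longrightarrow>
               ((\<lambda>y. v y t) has_derivative (\<lambda>h. gv x t \<bullet> h)) (at x within cball 0 R)"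
    and dgv: "\<And>x t. x \<in> cball 0 R \<Longrightarrow> 0 \<le> t \<Longrightarrow> ereal t < T \<Longrightarrow>
               ((\<lambda>y. gv y t) has_derivative (\<lambda>h. Hv x t *v h)) (at x within cball 0 R)"
    and upos: "\<And>x t. x \<in> cball 0 R \<Longrightarrow> 0 \<le> t \<Longrightarrow> ereal t < T \<Longrightarrow> u x t > 0"
    and radu: "\<And>t. 0 \<le> t \<Longrightarrow> ereal t < T \<Longrightarrow> radial (\<lambda>x. u x t)"
    and radv: "\<And>t. 0 \<le> t \<Longrightarrow> ereal t < T \<Longrightarrow> radial (\<lambda>x. v x t)"
    and divg: "\<And>x t. x \<in> ball 0 R \<Longrightarrow> 0 < t \<Longrightarrow> ereal t < T \<Longrightarrow>
               has_divergence (\<lambda>y. flux chi (u y t) (gu y t) (gv y t)) (ut x t) x"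
    and veq: "\<And>x t. x \<in> ball 0 R \<Longrightarrow> 0 < t \<Longrightarrow> ereal t < T \<Longrightarrow>
               0 = (\<Sum>i\<in>UNIV. Hv x t $ i $ i) - mu + u x t"
    and bc: "\<And>x t. norm x = R \<Longrightarrow> 0 < t \<Longrightarrow> ereal t < T \<Longrightarrow>
               flux chi (u x t) (gu x t) (gv x t) \<bullet> ((1/R) *\<^sub>R x) = 0"
    and init: "\<And>x. x \<in> cball 0 R \<Longrightarrow> u x 0 = u0 x"
    and neu: "neumann_zero R u0"
begin

definition "u_ray e t s = u (s *\<^sub>R e) t"
definition "ur_ray e t s = gu (s *\<^sub>R e) t \<bullet> e"
definition "urr_ray e t s = (Hu (s *\<^sub>R e) t *v e) \<bullet> e"
definition "vr_ray e t s = gv (s *\<^sub>R e) t \<bullet> e"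
definition "vrr_ray e t s = (Hv (s *\<^sub>R e) t *v e) \<bullet> e"
definition "flux_ray e t s = radial_flux chi (u_ray e t s) (ur_ray e t s) (vr_ray e t s)"
definition "flux_ray_deriv e t s =
  radial_flux_deriv chi (u_ray e t s) (ur_ray e t s) (urr_ray e t s) (vr_ray e t s) (vrr_ray e t s)"

text \<open>Rays are parametrised over the whole diameter, so that \<open>s = 0\<close> is an interior point.\<close>
abbreviation "diam \<equiv> {-R..R}"

lemma ray_in_cball: "norm e = 1 \<Longrightarrow> s \<in> diam \<Longrightarrow> s *\<^sub>R e \<in> cball 0 R"
  by auto

lemma at_within_diam: "-R < s \<Longrightarrow> s < R \<Longrightarrow> at s within diam = at s"
  by (intro at_within_interior) auto

lemma has_real_derivative_u_ray: "norm e = 1 \<Longrightarrow> 0 \<le> t \<Longrightarrow> ereal t < T \<Longrightarrow> s \<in> diam \<Longrightarrow>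
    (u_ray e t has_real_derivative ur_ray e t s) (at s within diam)"
  unfolding u_ray_def[abs_def] ur_ray_def
  by (rule has_real_derivative_along_ray[OF du[OF ray_in_cball]]) (auto intro: ray_in_cball)

lemma has_real_derivative_ur_ray: "norm e = 1 \<Longrightarrow> 0 \<le> t \<Longrightarrow> ereal t < T \<Longrightarrow> s \<in> diam \<Longrightarrow>
    (ur_ray e t has_real_derivative urr_ray e t s) (at s within diam)"
  unfolding urr_ray_def ur_ray_def[abs_def]
  by (rule has_real_derivative_along_ray_component[OF dgu[OF ray_in_cball]]) (auto intro: ray_in_cball)

lemma has_real_derivative_vr_ray: "norm e = 1 \<Longrightarrow> 0 \<le> t \<Longrightarrow> ereal t < T \<Longrightarrow> s \<in> diam \<Longrightarrow>
    (vr_ray e t has_real_derivative vrr_ray e t s) (at s within diam)"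
  unfolding vrr_ray_def vr_ray_def[abs_def]
  by (rule has_real_derivative_along_ray_component[OF dgv[OF ray_in_cball]]) (auto intro: ray_in_cball)

lemma u_ray_pos: "norm e = 1 \<Longrightarrow> 0 \<le> t \<Longrightarrow> ereal t < T \<Longrightarrow> s \<in> diam \<Longrightarrow> u_ray e t s > 0"
  unfolding u_ray_def by (rule upos[OF ray_in_cball])

lemma continuous_on_ray:
  fixes F :: "real^'n \<Rightarrow> real \<Rightarrow> 'b::topological_space"
  assumes "continuous_on {(x,t). x \<in> cball 0 R \<and> 0 \<le> t \<and> ereal t < T} (\<lambda>(x,t). F x t)"
    and "norm e = 1" "0 \<le> t" "ereal t < T"
  shows "continuous_on diam (\<lambda>s. F (s *\<^sub>R e) t)"
proof -
  have "continuous_on diam (\<lambda>s. (\<lambda>(x,t). F x t) (s *\<^sub>R e, t))"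
    by (rule continuous_on_compose2[OF assms(1)]) (use assms in \<open>auto intro!: continuous_intros\<close>)
  thus ?thesis by simp
qed

lemma continuous_on_time:
  fixes F :: "real^'n \<Rightarrow> real \<Rightarrow> 'b::topological_space"
  assumes "continuous_on {(x,t). x \<in> cball 0 R \<and> 0 \<le> t \<and> ereal t < T} (\<lambda>(x,t). F x t)"
    and "x \<in> cball 0 R"
  shows "continuous_on {t. 0 \<le> t \<and> ereal t < T} (\<lambda>t. F x t)"
proof -
  have "continuous_on {t. 0 \<le> t \<and> ereal t < T} (\<lambda>t. (\<lambda>(x,t). F x t) (x, t))"
    by (rule continuous_on_compose2[OF assms(1)]) (use assms in \<open>auto intro!: continuous_intros\<close>)
  thus ?thesis by simp
qed

lemma continuous_on_u_ray: "norm e = 1 \<Longrightarrow> 0 \<le> t \<Longrightarrow> ereal t < T \<Longrightarrow> continuous_on diam (u_ray e t)"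
  unfolding u_ray_def[abs_def] by (rule continuous_on_ray[OF cu])

lemma continuous_on_ur_ray: "norm e = 1 \<Longrightarrow> 0 \<le> t \<Longrightarrow> ereal t < T \<Longrightarrow> continuous_on diam (ur_ray e t)"
  unfolding ur_ray_def[abs_def] by (intro continuous_intros continuous_on_ray[OF cgu])

lemma continuous_on_urr_ray: "norm e = 1 \<Longrightarrow> 0 \<le> t \<Longrightarrow> ereal t < T \<Longrightarrow> continuous_on diam (urr_ray e t)"
  unfolding urr_ray_def[abs_def] by (intro continuous_on_matrix_quadratic_form continuous_on_ray[OF cHu])

lemma continuous_on_vr_ray: "norm e = 1 \<Longrightarrow> 0 \<le> t \<Longrightarrow> ereal t < T \<Longrightarrow> continuous_on diam (vr_ray e t)"
  unfolding vr_ray_def[abs_def] by (intro continuous_intros continuous_on_ray[OF cgv])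

lemma continuous_on_vrr_ray: "norm e = 1 \<Longrightarrow> 0 \<le> t \<Longrightarrow> ereal t < T \<Longrightarrow> continuous_on diam (vrr_ray e t)"
  unfolding vrr_ray_def[abs_def] by (intro continuous_on_matrix_quadratic_form continuous_on_ray[OF cHv])

lemma continuous_on_flux_ray:
  "norm e = 1 \<Longrightarrow> 0 \<le> t \<Longrightarrow> ereal t < T \<Longrightarrow> continuous_on diam (flux_ray e t)"
  unfolding flux_ray_def[abs_def]
  by (intro continuous_on_radial_flux continuous_on_u_ray continuous_on_ur_ray continuous_on_vr_ray
      u_ray_pos)

lemma continuous_on_flux_ray_deriv:
  "norm e = 1 \<Longrightarrow> 0 \<le> t \<Longrightarrow> ereal t < T \<Longrightarrow> continuous_on diam (flux_ray_deriv e t)"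
  unfolding flux_ray_deriv_def[abs_def]
  by (intro continuous_on_radial_flux_deriv continuous_on_u_ray continuous_on_ur_ray
      continuous_on_urr_ray continuous_on_vr_ray continuous_on_vrr_ray u_ray_pos)

lemma has_real_derivative_flux_ray:
  "norm e = 1 \<Longrightarrow> 0 \<le> t \<Longrightarrow> ereal t < T \<Longrightarrow> s \<in> diam \<Longrightarrow>
    (flux_ray e t has_real_derivative flux_ray_deriv e t s) (at s within diam)"
  unfolding flux_ray_def[abs_def] flux_ray_deriv_def
  by (intro has_real_derivative_radial_flux has_real_derivative_u_ray has_real_derivative_ur_ray
      has_real_derivative_vr_ray u_ray_pos)

lemma u_eq_u_ray:
  assumes "norm e = 1" "0 \<le> t" "ereal t < T"
  shows "u y t = u_ray e t (norm y)"
proof -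
  have "norm (norm y *\<^sub>R e) = norm y" using assms by simp
  thus ?thesis using radu[OF assms(2,3)] unfolding radial_def u_ray_def by metis
qed

lemma gu_eq_radial:
  assumes "norm e = 1" "0 \<le> t" "ereal t < T" "y \<in> cball 0 R" "y \<noteq> 0"
  shows "gu y t = (ur_ray e t (norm y) / norm y) *\<^sub>R y"
  unfolding ur_ray_def using radial_gradient_eq[OF radu R du] assms by blast

lemma gv_eq_radial:
  assumes "norm e = 1" "0 \<le> t" "ereal t < T" "y \<in> cball 0 R" "y \<noteq> 0"
  shows "gv y t = (vr_ray e t (norm y) / norm y) *\<^sub>R y"
  unfolding vr_ray_def using radial_gradient_eq[OF radv R dv] assms by blast

lemma gu_on_ray:
  assumes "norm e = 1" "0 \<le> t" "ereal t < T" "\<bar>s\<bar> \<le> R"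
  shows "gu (s *\<^sub>R e) t = ur_ray e t s *\<^sub>R e"
  unfolding ur_ray_def using radial_gradient_on_ray[OF radu R du] assms by blast

lemma gv_on_ray:
  assumes "norm e = 1" "0 \<le> t" "ereal t < T" "\<bar>s\<bar> \<le> R"
  shows "gv (s *\<^sub>R e) t = vr_ray e t s *\<^sub>R e"
  unfolding vr_ray_def using radial_gradient_on_ray[OF radv R dv] assms by blast

lemma gu_at_0: "0 \<le> t \<Longrightarrow> ereal t < T \<Longrightarrow> gu 0 t = 0"
  using radial_gradient_at_0[OF radu R du] R by simp

lemma gv_at_0: "0 \<le> t \<Longrightarrow> ereal t < T \<Longrightarrow> gv 0 t = 0"
  using radial_gradient_at_0[OF radv R dv] R by simp

lemma flux_ray_at_0: "0 \<le> t \<Longrightarrow> ereal t < T \<Longrightarrow> flux_ray e t 0 = 0"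
  by (simp add: flux_ray_def radial_flux_def ur_ray_def vr_ray_def gu_at_0 gv_at_0)

lemma vr_ray_at_0: "0 \<le> t \<Longrightarrow> ereal t < T \<Longrightarrow> vr_ray e t 0 = 0"
  by (simp add: vr_ray_def gv_at_0)

lemma flux_eq_radial:
  assumes e: "norm e = 1" and t: "0 \<le> t" "ereal t < T" and y: "y \<in> cball 0 R" "y \<noteq> 0"
  shows "flux chi (u y t) (gu y t) (gv y t) = (flux_ray e t (norm y) / norm y) *\<^sub>R y"
proof -
  let ?r = "norm y"
  let ?U = "u_ray e t ?r" and ?B = "ur_ray e t ?r" and ?A = "vr_ray e t ?r"
  have r: "?r > 0" "?r \<in> diam" using y R norm_ge_zero[of y] by (auto simp del: norm_ge_zero)
  have gu: "gu y t = (?B / ?r) *\<^sub>R y" and gv: "gv y t = (?A / ?r) *\<^sub>R y"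
    using gu_eq_radial[OF e t y] gv_eq_radial[OF e t y] .
  have "(norm (gu y t))\<^sup>2 = ?B\<^sup>2" "(norm (gv y t))\<^sup>2 = ?A\<^sup>2"
    using r by (simp_all add: gu gv power_mult_distrib power_divide)
  hence "flux chi (u y t) (gu y t) (gv y t) =
     (?U / sqrt (?U\<^sup>2 + ?B\<^sup>2) * (?B / ?r) - chi * ?U / sqrt (1 + ?A\<^sup>2) * (?A / ?r)) *\<^sub>R y"
    unfolding flux_def u_eq_u_ray[OF e t, of y] by (simp add: gu gv scaleR_diff_left)
  also have "\<dots> = (flux_ray e t ?r / ?r) *\<^sub>R y"
    using sqrt_sum_squares_pos[OF u_ray_pos[OF e t r(2)], of ?B] sqrt_one_plus_square_pos[of ?A] r(1)
    by (simp add: flux_ray_def radial_flux_def field_simps)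
  finally show ?thesis .
qed

lemma flux_on_ray_inner:
  assumes e: "norm e = 1" and t: "0 \<le> t" "ereal t < T" and s: "\<bar>s\<bar> \<le> R"
  shows "flux chi (u (s *\<^sub>R e) t) (gu (s *\<^sub>R e) t) (gv (s *\<^sub>R e) t) \<bullet> e = flux_ray e t s"
proof -
  have "e \<bullet> e = 1" using e by (simp add: power2_norm_eq_inner[symmetric])
  moreover have "(norm (gu (s *\<^sub>R e) t))\<^sup>2 = (ur_ray e t s)\<^sup>2" "(norm (gv (s *\<^sub>R e) t))\<^sup>2 = (vr_ray e t s)\<^sup>2"
    using e by (simp_all add: gu_on_ray[OF e t s] gv_on_ray[OF e t s] power_mult_distrib)
  ultimately show ?thesis unfolding flux_def
    by (simp add: gu_on_ray[OF e t s] gv_on_ray[OF e t s] inner_diff_left flux_ray_def radial_flux_def u_ray_def)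
qed

lemma radial_pde:
  assumes e: "norm e = 1" and t: "0 < t" "ereal t < T" and s: "0 < s" "s < R"
  shows "ut (s *\<^sub>R e) t = flux_ray_deriv e t s + (real CARD('n) - 1) * flux_ray e t s / s"
proof -
  have t0: "0 \<le> t" using t by simp
  have x: "s *\<^sub>R e \<in> ball 0 R" and nx: "norm (s *\<^sub>R e) = s" using e s by auto
  obtain DG where DG: "((\<lambda>y. flux chi (u y t) (gu y t) (gv y t)) has_derivative DG) (at (s *\<^sub>R e))"
    and ut: "ut (s *\<^sub>R e) t = (\<Sum>i\<in>UNIV. DG (axis i 1) $ i)"
    using divg[OF x t] unfolding has_divergence_def by blast
  have d: "(flux_ray e t has_real_derivative flux_ray_deriv e t s) (at (norm (s *\<^sub>R e)))"
    using has_real_derivative_flux_ray[OF e t0 t(2), of s] s at_within_diam[of s] nx by simp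
  have "(\<Sum>i\<in>UNIV. DG (axis i 1) $ i)
      = flux_ray_deriv e t s + (real CARD('n) - 1) * flux_ray e t (norm (s *\<^sub>R e)) / norm (s *\<^sub>R e)"
  proof (rule trace_derivative_radial_field[OF _ _ _ _ d DG])
    show "open (ball 0 R - {0::real^'n})" by (simp add: open_Diff)
    fix y :: "real^'n" assume "y \<in> ball 0 R - {0}"
    thus "flux chi (u y t) (gu y t) (gv y t) = (flux_ray e t (norm y) / norm y) *\<^sub>R y"
      using flux_eq_radial[OF e t0 t(2)] by auto
  qed (use x nx s in auto)
  thus ?thesis unfolding ut nx .
qed

lemma radial_elliptic:
  assumes e: "norm e = 1" and t: "0 < t" "ereal t < T" and s: "0 < s" "s < R"
  shows "vrr_ray e t s + (real CARD('n) - 1) * vr_ray e t s / s = mu - u_ray e t s"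
proof -
  have t0: "0 \<le> t" using t by simp
  have x: "s *\<^sub>R e \<in> ball 0 R" and nx: "norm (s *\<^sub>R e) = s" using e s by auto
  have "at (s *\<^sub>R e) within cball 0 R = at (s *\<^sub>R e)" using x by (intro at_within_interior) simp
  hence DG: "((\<lambda>y. gv y t) has_derivative (\<lambda>h. Hv (s *\<^sub>R e) t *v h)) (at (s *\<^sub>R e))"
    using dgv[OF _ t0 t(2), of "s *\<^sub>R e"] x by simp
  have d: "(vr_ray e t has_real_derivative vrr_ray e t s) (at (norm (s *\<^sub>R e)))"
    using has_real_derivative_vr_ray[OF e t0 t(2), of s] s at_within_diam[of s] nx by simp
  have "(\<Sum>i\<in>UNIV. (Hv (s *\<^sub>R e) t *v axis i 1) $ i)
      = vrr_ray e t s + (real CARD('n) - 1) * vr_ray e t (norm (s *\<^sub>R e)) / norm (s *\<^sub>R e)"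
  proof (rule trace_derivative_radial_field[OF _ _ _ _ d DG])
    show "open (ball 0 R - {0::real^'n})" by (simp add: open_Diff)
    fix y :: "real^'n" assume "y \<in> ball 0 R - {0}"
    thus "gv y t = (vr_ray e t (norm y) / norm y) *\<^sub>R y"
      using gv_eq_radial[OF e t0 t(2)] by auto
  qed (use x nx s in auto)
  hence "(\<Sum>i\<in>UNIV. Hv (s *\<^sub>R e) t $ i $ i) = vrr_ray e t s + (real CARD('n) - 1) * vr_ray e t s / s"
    unfolding sum_matrix_vector_axis nx .
  thus ?thesis using veq[OF x t] by (simp add: u_ray_def)
qed

lemma radial_pde_closed:
  assumes e: "norm e = 1" and t: "0 < t" "ereal t < T" and s: "0 < s" "s \<le> R"
  shows "ut (s *\<^sub>R e) t = flux_ray_deriv e t s + (real CARD('n) - 1) * flux_ray e t s / s"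
proof (rule continuous_on_Icc_eq_on_closure[of "s/2" R "\<lambda>s. ut (s *\<^sub>R e) t"])
  have t0: "0 \<le> t" and sub: "{s/2..R} \<subseteq> diam" using t s by auto
  show "continuous_on {s/2..R} (\<lambda>s. ut (s *\<^sub>R e) t)"
    using continuous_on_subset[OF continuous_on_ray[OF cut e t0 t(2)] sub] .
  show "continuous_on {s/2..R} (\<lambda>s. flux_ray_deriv e t s + (real CARD('n) - 1) * flux_ray e t s / s)"
    using continuous_on_subset[OF continuous_on_flux_ray_deriv[OF e t0 t(2)] sub]
      continuous_on_subset[OF continuous_on_flux_ray[OF e t0 t(2)] sub] s
    by (intro continuous_intros) auto
qed (use s radial_pde[OF e t] in auto)

lemma radial_elliptic_closed:
  assumes e: "norm e = 1" and t: "0 < t" "ereal t < T" and s: "0 < s" "s \<le> R"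
  shows "vrr_ray e t s + (real CARD('n) - 1) * vr_ray e t s / s = mu - u_ray e t s"
proof (rule continuous_on_Icc_eq_on_closure[of "s/2" R _ "\<lambda>s. mu - u_ray e t s"])
  have t0: "0 \<le> t" and sub: "{s/2..R} \<subseteq> diam" using t s by auto
  show "continuous_on {s/2..R} (\<lambda>s. vrr_ray e t s + (real CARD('n) - 1) * vr_ray e t s / s)"
    using continuous_on_subset[OF continuous_on_vrr_ray[OF e t0 t(2)] sub]
      continuous_on_subset[OF continuous_on_vr_ray[OF e t0 t(2)] sub] s
    by (intro continuous_intros) auto
  show "continuous_on {s/2..R} (\<lambda>s. mu - u_ray e t s)"
    using continuous_on_subset[OF continuous_on_u_ray[OF e t0 t(2)] sub]
    by (intro continuous_intros)
qed (use s radial_elliptic[OF e t] in auto)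

lemma flux_ray_at_R: "norm e = 1 \<Longrightarrow> 0 < t \<Longrightarrow> ereal t < T \<Longrightarrow> flux_ray e t R = 0"
  using bc[of "R *\<^sub>R e" t] flux_on_ray_inner[of e t R] R by simp

lemma ur_ray_at_R_initial:
  assumes e: "norm e = 1"
  shows "ur_ray e 0 R = 0"
proof -
  have T0: "ereal 0 < T" using T by (simp add: zero_ereal_def)
  have "norm (R *\<^sub>R e) = R" using e R by simp
  then obtain Df where Df: "(u0 has_derivative Df) (at (R *\<^sub>R e) within cball 0 R)"
    and D0: "Df ((1/R) *\<^sub>R (R *\<^sub>R e)) = 0"
    using neu unfolding neumann_zero_def by blast
  have ray: "\<And>s. s \<in> {0..R} \<Longrightarrow> s *\<^sub>R e \<in> cball 0 R" using e by auto
  have "((\<lambda>s. u0 (s *\<^sub>R e)) has_real_derivative Df e) (at R within {0..R})"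
    by (rule has_real_derivative_along_ray[OF Df ray])
  hence d1: "((\<lambda>s. u0 (s *\<^sub>R e)) has_real_derivative 0) (at R within {0..R})"
    using D0 R by simp
  have "(u_ray e 0 has_real_derivative ur_ray e 0 R) (at R within {0..R})"
    using DERIV_subset[OF has_real_derivative_u_ray[OF e _ T0]] R by auto
  hence d2: "((\<lambda>s. u0 (s *\<^sub>R e)) has_real_derivative ur_ray e 0 R) (at R within {0..R})"
    unfolding has_field_derivative_def
    by (rule has_derivative_transform[rotated 2]) (use R e in \<open>auto simp: u_ray_def init\<close>)
  show ?thesis using real_derivative_unique_Icc[OF R _ d2 d1] R by simp
qed

lemma vr_ray_at_R_initial:
  assumes e: "norm e = 1"
  shows "vr_ray e 0 R = 0"
proof -
  have x: "R *\<^sub>R e \<in> cball 0 R" using e R by simp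
  have "continuous_on {t. 0 \<le> t \<and> ereal t < T} (\<lambda>t. flux_ray e t R)"
    unfolding flux_ray_def u_ray_def ur_ray_def vr_ray_def
    by (intro continuous_on_radial_flux continuous_intros continuous_on_time[OF cu x]
        continuous_on_time[OF cgu x] continuous_on_time[OF cgv x]) (use upos[OF x] in auto)
  hence "flux_ray e 0 R = 0"
    using continuous_on_ereal_interval_eq_at_0[OF T] flux_ray_at_R[OF e] by blast
  moreover have "u_ray e 0 R > 0" using u_ray_pos[OF e] T R by (simp add: zero_ereal_def)
  ultimately show ?thesis
    using radial_flux_no_gradients[OF _ chi] ur_ray_at_R_initial[OF e] unfolding flux_ray_def by blast
qed

lemma weighted_vr_ray_has_integral:
  assumes e: "norm e = 1" and t: "0 < t" "ereal t < T" and s: "0 < s" "s \<le> R"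
  shows "((\<lambda>r. r ^ (CARD('n) - 1) * (mu - u_ray e t r)) has_integral s ^ (CARD('n) - 1) * vr_ray e t s) {0..s}"
proof (rule radial_divergence_has_integral[OF s(1)])
  have t0: "0 \<le> t" and sub: "{0..s} \<subseteq> diam" using t s by auto
  show "1 \<le> CARD('n)" by (simp add: Suc_leI)
  show "continuous_on {0..s} (vr_ray e t)"
    using continuous_on_subset[OF continuous_on_vr_ray[OF e t0 t(2)] sub] .
  show "vr_ray e t 0 = 0" using vr_ray_at_0[OF t0 t(2)] .
  fix r assume r: "0 < r" "r < s"
  thus "(vr_ray e t has_real_derivative vrr_ray e t r) (at r)"
    using has_real_derivative_vr_ray[OF e t0 t(2), of r] at_within_diam[of r] s by simp
  show "vrr_ray e t r + (real CARD('n) - 1) * vr_ray e t r / r = mu - u_ray e t r"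
    using radial_elliptic[OF e t] r s by simp
qed

lemma weighted_ut_has_integral:
  assumes e: "norm e = 1" and t: "0 < t" "ereal t < T"
  shows "((\<lambda>r. r ^ (CARD('n) - 1) * ut (r *\<^sub>R e) t) has_integral 0) {0..R}"
proof -
  have t0: "0 \<le> t" and sub: "{0..R} \<subseteq> diam" using t R by auto
  have "((\<lambda>r. r ^ (CARD('n) - 1) * ut (r *\<^sub>R e) t) has_integral R ^ (CARD('n) - 1) * flux_ray e t R) {0..R}"
  proof (rule radial_divergence_has_integral[OF R])
    show "1 \<le> CARD('n)" by (simp add: Suc_leI)
    show "continuous_on {0..R} (flux_ray e t)"
      using continuous_on_subset[OF continuous_on_flux_ray[OF e t0 t(2)] sub] .
    show "flux_ray e t 0 = 0" using flux_ray_at_0[OF t0 t(2)] .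
    fix r assume r: "0 < r" "r < R"
    thus "(flux_ray e t has_real_derivative flux_ray_deriv e t r) (at r)"
      using has_real_derivative_flux_ray[OF e t0 t(2), of r] at_within_diam[of r] by simp
    show "flux_ray_deriv e t r + (real CARD('n) - 1) * flux_ray e t r / r = ut (r *\<^sub>R e) t"
      using radial_pde[OF e t r] by simp
  qed
  thus ?thesis using flux_ray_at_R[OF e t] by simp
qed

lemma continuous_on_ray_time_rectangle:
  fixes F :: "real^'n \<Rightarrow> real \<Rightarrow> 'b::topological_space"
  assumes c: "continuous_on {(x,t). x \<in> cball 0 R \<and> 0 \<le> t \<and> ereal t < T} (\<lambda>(x,t). F x t)"
    and e: "norm e = 1" and t1: "ereal t1 < T"
  shows "continuous_on ({0..t1} \<times> {0..R}) (\<lambda>p. F (snd p *\<^sub>R e) (fst p))"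
proof -
  have "(\<lambda>p. (snd p *\<^sub>R e, fst p)) ` ({0..t1} \<times> {0..R})
      \<subseteq> {(x,t). x \<in> cball 0 R \<and> 0 \<le> t \<and> ereal t < T}"
  proof (rule image_subsetI)
    fix p :: "real \<times> real" assume p: "p \<in> {0..t1} \<times> {0..R}"
    hence "ereal (fst p) \<le> ereal t1" by (simp add: mem_Times_iff)
    hence "ereal (fst p) < T" using t1 by (rule le_less_trans)
    thus "(snd p *\<^sub>R e, fst p) \<in> {(x,t). x \<in> cball 0 R \<and> 0 \<le> t \<and> ereal t < T}"
      using p e by (simp add: mem_Times_iff)
  qed
  from continuous_on_compose2[OF c _ this] show ?thesis by (simp add: continuous_intros)
qed

lemma continuous_on_cball_time_rectangle:
  assumes "ereal t1 < T"
  shows "continuous_on (cball 0 R \<times> {0..t1}) (\<lambda>p. u (fst p) (snd p))"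
proof -
  have "cball 0 R \<times> {0..t1} \<subseteq> {(x,t). x \<in> cball 0 R \<and> 0 \<le> t \<and> ereal t < T}"
  proof (rule subsetI)
    fix p assume p: "p \<in> cball 0 R \<times> {0..t1}"
    hence "ereal (snd p) \<le> ereal t1" by (simp add: mem_Times_iff)
    hence "ereal (snd p) < T" using assms by (rule le_less_trans)
    thus "p \<in> {(x,t). x \<in> cball 0 R \<and> 0 \<le> t \<and> ereal t < T}" using p by (cases p) auto
  qed
  from continuous_on_subset[OF cu this] show ?thesis by (simp add: case_prod_beta)
qed

definition "mass e t = integral {0..R} (\<lambda>s. s ^ (CARD('n) - 1) * u_ray e t s)"

lemma has_real_derivative_mass:
  assumes e: "norm e = 1" and t1: "0 \<le> t1" "ereal t1 < T" and t: "t \<in> {0..t1}"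
  shows "(mass e has_real_derivative integral {0..R} (\<lambda>s. s ^ (CARD('n) - 1) * ut (s *\<^sub>R e) t))
           (at t within {0..t1})"
proof -
  have time: "0 \<le> t' \<and> ereal t' < T" if "t' \<in> {0..t1}" for t'
    using that t1 by (auto intro: le_less_trans[of _ "ereal t1"])
  have ray: "s *\<^sub>R e \<in> cball 0 R" if "s \<in> cbox 0 R" for s using that e by (auto simp: cbox_interval)
  have "((\<lambda>t. integral (cbox 0 R) (\<lambda>s. s ^ (CARD('n) - 1) * u (s *\<^sub>R e) t)) has_field_derivative
      integral (cbox 0 R) (\<lambda>s. s ^ (CARD('n) - 1) * ut (s *\<^sub>R e) t)) (at t within {0..t1})"
  proof (rule leibniz_rule_field_derivative[where fx = "\<lambda>t s. s ^ (CARD('n) - 1) * ut (s *\<^sub>R e) t"])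
    fix t' s assume t': "t' \<in> {0..t1}" and s: "s \<in> cbox 0 R"
    have "{0..t1} \<subseteq> {t. 0 \<le> t \<and> ereal t < T}" using time by blast
    from DERIV_subset[OF dut[OF ray[OF s] time[OF t', THEN conjunct1] time[OF t', THEN conjunct2]] this]
    show "((\<lambda>t. s ^ (CARD('n) - 1) * u (s *\<^sub>R e) t) has_field_derivative
        s ^ (CARD('n) - 1) * ut (s *\<^sub>R e) t') (at t' within {0..t1})"
      by (rule DERIV_cmult)
  next
    fix t' assume "t' \<in> {0..t1}"
    have "{0..R} \<subseteq> diam" by auto
    from continuous_on_subset[OF continuous_on_u_ray[OF e] this] time[OF \<open>t' \<in> {0..t1}\<close>]
    have "continuous_on {0..R} (u_ray e t')" by blast
    thus "(\<lambda>s. s ^ (CARD('n) - 1) * u (s *\<^sub>R e) t') integrable_on cbox 0 R"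
      unfolding u_ray_def[abs_def] cbox_interval by (intro integrable_continuous_interval continuous_intros)
  next
    have "continuous_on ({0..t1} \<times> cbox 0 R) (\<lambda>p. ut (snd p *\<^sub>R e) (fst p))"
      using continuous_on_ray_time_rectangle[OF cut e t1(2)] by (simp add: cbox_interval)
    hence "continuous_on ({0..t1} \<times> cbox 0 R) (\<lambda>p. snd p ^ (CARD('n) - 1) * ut (snd p *\<^sub>R e) (fst p))"
      by (intro continuous_intros)
    thus "continuous_on ({0..t1} \<times> cbox 0 R) (\<lambda>(t, s). s ^ (CARD('n) - 1) * ut (s *\<^sub>R e) t)"
      by (simp add: case_prod_beta)
  qed (use t in auto)
  moreover have "mass e = (\<lambda>t. integral (cbox 0 R) (\<lambda>s. s ^ (CARD('n) - 1) * u (s *\<^sub>R e) t))"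
    by (simp add: fun_eq_iff mass_def u_ray_def cbox_interval)
  ultimately show ?thesis by (simp only: cbox_interval)
qed

lemma mass_const:
  assumes e: "norm e = 1" and t: "0 < t" "ereal t < T"
  shows "mass e t = mass e 0"
proof (rule DERIV_isconst_end[OF t(1)])
  show "continuous_on {0..t} (mass e)"
    using has_real_derivative_mass[OF e less_imp_le[OF t(1)] t(2)] by (rule DERIV_continuous_on)
  fix x assume x: "0 < x" "x < t"
  have "ereal x < T" using x(2) t(2) by (simp add: less_trans[OF _ t(2)])
  hence "integral {0..R} (\<lambda>s. s ^ (CARD('n) - 1) * ut (s *\<^sub>R e) x) = 0"
    using weighted_ut_has_integral[OF e x(1)] by (simp add: integral_unique)
  moreover have "at x within {0..t} = at x" using x by (intro at_within_interior) auto
  ultimately show "(mass e has_real_derivative 0) (at x)"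
    using has_real_derivative_mass[OF e less_imp_le[OF t(1)] t(2), of x] x by simp
qed

text \<open>No boundary condition is imposed on \<open>v\<close>; its Neumann condition follows because
  \<open>R\<^sup>n\<^sup>-\<^sup>1 v\<^sub>r(R, t) = \<integral>\<^sub>0\<^sup>R r\<^sup>n\<^sup>-\<^sup>1 (\<mu> - u) dr\<close> is independent of \<open>t\<close> by mass conservation
  and vanishes at \<open>t = 0\<close> by the no-flux condition and the Neumann condition on \<open>u\<^sub>0\<close>.\<close>
lemma vr_ray_at_R:
  assumes e: "norm e = 1" and t: "0 < t" "ereal t < T"
  shows "vr_ray e t R = 0"
proof -
  define C where "C = integral {0..R} (\<lambda>s. s ^ (CARD('n) - 1) * mu) - mass e 0"
  have W: "R ^ (CARD('n) - 1) * vr_ray e \<tau> R = C" if \<tau>: "0 < \<tau>" "ereal \<tau> < T" for \<tau>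
  proof -
    have "continuous_on {0..R} (u_ray e \<tau>)"
      using continuous_on_subset[OF continuous_on_u_ray[OF e _ \<tau>(2)]] \<tau> by fastforce
    hence i1: "(\<lambda>s. s ^ (CARD('n) - 1) * u_ray e \<tau> s) integrable_on {0..R}"
      by (intro integrable_continuous_interval continuous_intros)
    have i2: "(\<lambda>s. s ^ (CARD('n) - 1) * mu) integrable_on {0..R}"
      by (intro integrable_continuous_interval continuous_intros)
    have "R ^ (CARD('n) - 1) * vr_ray e \<tau> R = integral {0..R} (\<lambda>s. s ^ (CARD('n) - 1) * (mu - u_ray e \<tau> s))"
      using weighted_vr_ray_has_integral[OF e \<tau> R order_refl] by (simp add: integral_unique)
    also have "\<dots> = integral {0..R} (\<lambda>s. s ^ (CARD('n) - 1) * mu) - mass e \<tau>"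
      unfolding mass_def right_diff_distrib by (rule integral_diff[OF i2 i1])
    also have "mass e \<tau> = mass e 0" using mass_const[OF e \<tau>] .
    finally show ?thesis unfolding C_def .
  qed
  have x: "R *\<^sub>R e \<in> cball 0 R" using e R by simp
  have "continuous_on {t. 0 \<le> t \<and> ereal t < T} (\<lambda>t. R ^ (CARD('n) - 1) * vr_ray e t R)"
    unfolding vr_ray_def by (intro continuous_intros continuous_on_time[OF cgv x])
  hence "R ^ (CARD('n) - 1) * vr_ray e 0 R = C"
    using continuous_on_ereal_interval_eq_at_0[OF T] W by blast
  thus ?thesis using W[OF t] vr_ray_at_R_initial[OF e] R by simp
qed

lemma weighted_vr_ray_le:
  assumes e: "norm e = 1" and t: "0 < t" "ereal t < T" and s: "0 < s" "s \<le> R"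
  shows "s ^ (CARD('n) - 1) * vr_ray e t s \<le> s ^ (CARD('n) - 1) * (mu * s / real CARD('n))"
proof (rule has_integral_le[OF weighted_vr_ray_has_integral[OF e t s]])
  show "((\<lambda>r. r ^ (CARD('n) - 1) * mu) has_integral s ^ (CARD('n) - 1) * (mu * s / real CARD('n))) {0..s}"
  proof (rule radial_divergence_has_integral[OF s(1)])
    show "1 \<le> CARD('n)" by (simp add: Suc_leI)
    fix r :: real assume "0 < r"
    show "((\<lambda>r. mu * r / real CARD('n)) has_real_derivative mu / real CARD('n)) (at r)"
      by (auto intro!: derivative_eq_intros)
    show "mu / real CARD('n) + (real CARD('n) - 1) * (mu * r / real CARD('n)) / r = mu"
      using \<open>0 < r\<close> by (simp add: field_simps)
  qed (auto intro!: continuous_intros)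
  fix r assume "r \<in> {0..s}"
  thus "r ^ (CARD('n) - 1) * (mu - u_ray e t r) \<le> r ^ (CARD('n) - 1) * mu"
    using u_ray_pos[OF e less_imp_le[OF t(1)] t(2), of r] s by (simp add: mult_left_mono)
qed

lemma vr_ray_le:
  assumes "norm e = 1" "0 < t" "ereal t < T" "0 < s" "s \<le> R"
  shows "vr_ray e t s \<le> mu * s / real CARD('n)"
  using mult_left_le_imp_le[OF weighted_vr_ray_le[OF assms]] assms(4) by simp

lemma mu_nonneg: "mu \<ge> 0"
proof -
  obtain t where t: "0 < ereal t" "ereal t < T" using ereal_dense2[OF T] by auto
  define e :: "real^'n" where "e = axis undefined 1"
  have e: "norm e = 1" by (simp add: e_def)
  show ?thesis
    using vr_ray_le[OF e _ t(2) R order_refl] vr_ray_at_R[OF e _ t(2)] t(1) R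
    by (simp add: zero_le_divide_iff zero_le_mult_iff)
qed

definition "kappa = chi * mu + 2 * (real CARD('n) - 1) * chi * mu / (3 * sqrt 3 * real CARD('n))"

lemma ut_ge_at_min_origin:
  assumes t: "0 < t" "ereal t < T" and min: "\<And>y. y \<in> cball 0 R \<Longrightarrow> u 0 t \<le> u y t"
  shows "ut 0 t \<ge> - kappa * u 0 t"
proof -
  have t0: "0 \<le> t" using t by simp
  have z: "(0::real^'n) \<in> cball 0 R" "(0::real^'n) \<in> ball 0 R" using R by auto
  have "at (0::real^'n) within cball 0 R = at 0" using R by (intro at_within_interior) simp
  hence "ut 0 t = (\<Sum>i\<in>UNIV. Hu 0 t $ i $ i) - chi * u 0 t * (\<Sum>i\<in>UNIV. Hv 0 t $ i $ i)"
    using du[OF z(1) t0 t(2)] dgu[OF z(1) t0 t(2)] dgv[OF z(1) t0 t(2)]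
      gu_at_0[OF t0 t(2)] gv_at_0[OF t0 t(2)] upos[OF z(1) t0 t(2)] divg[OF z(2) t]
    by (intro divergence_flux_at_critical_point) simp_all
  also have "(\<Sum>i\<in>UNIV. Hv 0 t $ i $ i) = mu - u 0 t" using veq[OF z(2) t] by simp
  also have "(\<Sum>i\<in>UNIV. Hu 0 t $ i $ i) \<ge> 0"
  proof (rule sum_nonneg)
    fix i :: 'n
    define e :: "real^'n" where "e = axis i 1"
    have e: "norm e = 1" by (simp add: e_def)
    have sub: "{-R..0} \<subseteq> diam" by auto
    have "urr_ray e t 0 \<ge> 0"
    proof (rule second_deriv_nonneg_at_right_end_min[of "-R" 0 "u_ray e t" "ur_ray e t"])
      fix s assume s: "s \<in> {-R..0}"
      hence "s \<in> diam" by auto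
      thus "(u_ray e t has_real_derivative ur_ray e t s) (at s within {-R..0})"
        using DERIV_subset[OF has_real_derivative_u_ray[OF e t0 t(2)] sub] by blast
      show "u_ray e t 0 \<le> u_ray e t s" using min[OF ray_in_cball[OF e \<open>s \<in> diam\<close>]] by (simp add: u_ray_def)
    next
      show "(ur_ray e t has_real_derivative urr_ray e t 0) (at 0 within {-R..0})"
        using DERIV_subset[OF has_real_derivative_ur_ray[OF e t0 t(2)] sub] R by auto
      show "ur_ray e t 0 = 0" by (simp add: ur_ray_def gu_at_0[OF t0 t(2)])
    qed (use R in simp)
    thus "Hu 0 t $ i $ i \<ge> 0" by (simp add: urr_ray_def e_def matrix_vector_axis_inner)
  qed
  hence "(\<Sum>i\<in>UNIV. Hu 0 t $ i $ i) - chi * u 0 t * (mu - u 0 t) \<ge> - (chi * mu) * u 0 t"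
    using chi upos[OF z(1) t0 t(2)] by (simp add: algebra_simps)
  moreover have "chi * mu \<le> kappa"
    using chi mu_nonneg by (simp add: kappa_def Suc_leI)
  ultimately show ?thesis using upos[OF z(1) t0 t(2)] by (smt (verit) mult_right_mono)
qed

lemma ur_ray_eq_0_at_min:
  assumes e: "norm e = 1" and t: "0 < t" "ereal t < T" and r: "0 < r" "r \<le> R"
    and min: "\<And>s. s \<in> diam \<Longrightarrow> u_ray e t r \<le> u_ray e t s"
  shows "ur_ray e t r = 0"
proof (cases "r < R")
  case True
  have "(u_ray e t has_real_derivative ur_ray e t r) (at r)"
    using has_real_derivative_u_ray[OF e _ t(2), of r] at_within_diam[of r] t r True by simp
  thus ?thesis
  proof (rule DERIV_local_min)
    show "0 < R - r" using True by simp
    show "\<forall>y. \<bar>r - y\<bar> < R - r \<longrightarrow> u_ray e t r \<le> u_ray e t y"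
    proof (intro allI impI)
      fix y assume "\<bar>r - y\<bar> < R - r"
      hence "y \<in> diam" using r by auto
      thus "u_ray e t r \<le> u_ray e t y" by (rule min)
    qed
  qed
next
  case False
  hence "r = R" using r by simp
  have "radial_flux chi (u_ray e t R) (ur_ray e t R) (vr_ray e t R) = 0"
    using flux_ray_at_R[OF e t] by (simp add: flux_ray_def)
  moreover have "u_ray e t R > 0" using u_ray_pos[OF e _ t(2), of R] t R by simp
  ultimately have "ur_ray e t R = 0"
    using radial_flux_no_gradients[OF _ chi] vr_ray_at_R[OF e t] by blast
  thus ?thesis using \<open>r = R\<close> by simp
qed

lemma ut_ge_at_min_off_origin:
  assumes t: "0 < t" "ereal t < T" and x: "x \<in> cball 0 R" "x \<noteq> 0"
    and min: "\<And>y. y \<in> cball 0 R \<Longrightarrow> u x t \<le> u y t"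
  shows "ut x t \<ge> - kappa * u x t"
proof -
  have t0: "0 \<le> t" using t by simp
  define r where "r = norm x"
  define e where "e = (1/r) *\<^sub>R x"
  have r: "0 < r" "r \<le> R" using x by (auto simp: r_def)
  hence r_diam: "r \<in> diam" by simp
  have e: "norm e = 1" and xr: "x = r *\<^sub>R e" using r by (simp_all add: e_def r_def)
  have U: "u_ray e t r = u x t" by (simp add: u_ray_def xr)
  have min_ray: "u_ray e t r \<le> u_ray e t s" if "s \<in> diam" for s
    using min[OF ray_in_cball[OF e that]] U by (simp add: u_ray_def)
  have crit: "ur_ray e t r = 0" using ur_ray_eq_0_at_min[OF e t r(1,2) min_ray] .
  have "urr_ray e t r \<ge> 0"
  proof (rule second_deriv_nonneg_at_right_end_min[of 0 r "u_ray e t" "ur_ray e t"])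
    have sub: "{0..r} \<subseteq> diam" using r by auto
    fix s assume "s \<in> {0..r}"
    hence "s \<in> diam" using r by auto
    thus "(u_ray e t has_real_derivative ur_ray e t s) (at s within {0..r})"
      using DERIV_subset[OF has_real_derivative_u_ray[OF e t0 t(2)] sub] by blast
    show "u_ray e t r \<le> u_ray e t s" using min_ray[OF \<open>s \<in> diam\<close>] .
  next
    have sub: "{0..r} \<subseteq> diam" using r by auto
    show "(ur_ray e t has_real_derivative urr_ray e t r) (at r within {0..r})"
      using DERIV_subset[OF has_real_derivative_ur_ray[OF e t0 t(2) r_diam] sub] .
  qed (use r crit in auto)
  from radial_divergence_at_critical_point_ge[OF u_ray_pos[OF e t0 t(2) r_diam] chi mu_nonneg r(1) _
      vr_ray_le[OF e t r(1,2)] this radial_elliptic_closed[OF e t r(1,2)]]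
  have "flux_ray_deriv e t r + (real CARD('n) - 1) * flux_ray e t r / r \<ge> - kappa * u_ray e t r"
    by (simp add: flux_ray_deriv_def flux_ray_def crit kappa_def Suc_leI)
  thus ?thesis using radial_pde_closed[OF e t r(1,2)] U xr by simp
qed

lemma ut_ge_at_min:
  assumes "0 < t" "ereal t < T" "x \<in> cball 0 R" "\<And>y. y \<in> cball 0 R \<Longrightarrow> u x t \<le> u y t"
  shows "ut x t \<ge> - kappa * u x t"
  using assms ut_ge_at_min_origin ut_ge_at_min_off_origin by (cases "x = 0") auto

lemma u_gt_perturbed_exp_decay:
  assumes eps: "0 < \<epsilon>" "\<epsilon> < m" and init0: "\<And>x. x \<in> cball 0 R \<Longrightarrow> m \<le> u0 x"
    and x: "x \<in> cball 0 R" and t: "0 \<le> t" "ereal t < T"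
  shows "(m - \<epsilon>) * exp (- (kappa + \<epsilon>) * t) < u x t"
proof (rule ccontr)
  assume touch: "\<not> ?thesis"
  define g where "g = (\<lambda>t. (m - \<epsilon>) * exp (- (kappa + \<epsilon>) * t))"
  have time: "\<And>t'. t' \<in> {0..t} \<Longrightarrow> 0 \<le> t' \<and> ereal t' < T"
    using t by (auto intro: le_less_trans[of _ "ereal t"])
  from continuous_on_cball_time_rectangle[OF t(2)]
  have "continuous_on (cball 0 R \<times> {0..t}) (\<lambda>p. u (fst p) (snd p))" .
  hence "continuous_on (cball 0 R \<times> {0..t}) (\<lambda>p. u (fst p) (snd p) - g (snd p))"
    unfolding g_def by (intro continuous_intros)
  hence cont: "continuous_on (cball 0 R \<times> {0..t}) (\<lambda>(x, t). u x t - g t)"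
    by (simp add: case_prod_beta)
  have "u x t - g t \<le> 0" using touch by (simp add: g_def)
  hence "\<exists>y\<in>cball 0 R. \<exists>s\<in>{0..t}. u y s - g s \<le> 0" using x t by (intro bexI[of _ x] bexI[of _ t]) auto
  moreover have "u y 0 - g 0 > 0" if "y \<in> cball 0 R" for y
    using init[OF that] init0[OF that] eps by (simp add: g_def)
  ultimately obtain xs ts where xs: "xs \<in> cball 0 R" and ts: "0 < ts" "ts \<le> t" and eq: "u xs ts - g ts = 0"
    and min: "\<And>y. y \<in> cball 0 R \<Longrightarrow> 0 \<le> u y ts - g ts"
    and before: "\<And>y s. y \<in> cball 0 R \<Longrightarrow> 0 \<le> s \<Longrightarrow> s < ts \<Longrightarrow> 0 < u y s - g s"
    using first_touching_time[OF compact_cball t(1) cont] by blast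
  have tsT: "0 \<le> ts" "ereal ts < T" using time[of ts] ts by auto
  have "u xs ts \<le> u y ts" if "y \<in> cball 0 R" for y using min[OF that] eq by simp
  from ut_ge_at_min[OF ts(1) tsT(2) xs this]
  have sp: "- kappa * g ts \<le> ut xs ts" using eq by simp
  have dg: "(g has_real_derivative g ts * (- (kappa + \<epsilon>))) (at ts within {0..ts})"
    unfolding g_def by (auto intro!: derivative_eq_intros simp: algebra_simps)
  have "{0..ts} \<subseteq> {t. 0 \<le> t \<and> ereal t < T}"
  proof
    fix s assume "s \<in> {0..ts}"
    thus "s \<in> {t. 0 \<le> t \<and> ereal t < T}" using time[of s] ts by simp
  qed
  from DERIV_subset[OF dut[OF xs tsT] this]
  have du: "((\<lambda>s. u xs s) has_real_derivative ut xs ts) (at ts within {0..ts})" .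
  have "ut xs ts - g ts * (- (kappa + \<epsilon>)) \<le> 0"
  proof (rule deriv_nonpos_at_right_end_min[OF ts(1) DERIV_diff[OF du dg]])
    fix s assume "0 \<le> s" "s < ts"
    thus "u xs ts - g ts \<le> u xs s - g s" using before[OF xs, of s] eq by linarith
  qed
  with sp have "\<epsilon> * g ts \<le> 0" by (simp add: algebra_simps)
  moreover have "g ts > 0" using eps by (simp add: g_def)
  ultimately show False using eps by (simp add: mult_le_0_iff)
qed

lemma u_ge_exp_decay:
  assumes m: "0 < m" and init0: "\<And>x. x \<in> cball 0 R \<Longrightarrow> m \<le> u0 x"
    and x: "x \<in> cball 0 R" and t: "0 \<le> t" "ereal t < T"
  shows "m * exp (- kappa * t) \<le> u x t"
proof (rule le_of_perturbed_exp_lower_bounds[OF m])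
  fix \<epsilon> :: real assume "0 < \<epsilon>" "\<epsilon> < m"
  thus "(m - \<epsilon>) * exp (- (kappa + \<epsilon>) * t) < u x t"
    by (rule u_gt_perturbed_exp_decay[OF _ _ init0 x t])
qed

lemma INF_punctured_ball_le_initial:
  assumes x: "x \<in> cball 0 R"
  shows "(INF y\<in>{y. 0 < norm y \<and> norm y < R}. u0 y) \<le> u0 x"
proof -
  define P where "P = {y::real^'n. 0 < norm y \<and> norm y < R}"
  have T0: "0 \<le> (0::real)" "ereal 0 < T" using T by (auto simp: zero_ereal_def)
  have "bdd_below (u0 ` P)"
  proof (rule bdd_belowI[of _ 0])
    fix y assume "y \<in> u0 ` P"
    then obtain z where "z \<in> P" "y = u0 z" by blast
    hence z: "z \<in> cball 0 R" "y = u0 z" by (simp_all add: P_def)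
    thus "0 \<le> y" using upos[OF z(1) T0] init[OF z(1)] by simp
  qed
  define e :: "real^'n" where "e = (if x = 0 then axis undefined 1 else (1 / norm x) *\<^sub>R x)"
  have e: "norm e = 1" and xe: "x = norm x *\<^sub>R e" by (simp_all add: e_def)
  have "(INF y\<in>P. u0 y) \<le> u_ray e 0 (norm x)"
  proof (rule continuous_on_Icc_lower_bound[of 0 R "u_ray e 0"])
    have "{0..R} \<subseteq> diam" by auto
    thus "continuous_on {0..R} (u_ray e 0)" by (rule continuous_on_subset[OF continuous_on_u_ray[OF e T0]])
    fix s assume s: "0 < s" "s < R"
    moreover have "e \<noteq> 0" using e by auto
    ultimately have "s *\<^sub>R e \<in> P" using e by (simp add: P_def)
    hence "(INF y\<in>P. u0 y) \<le> u0 (s *\<^sub>R e)" by (rule cINF_lower[OF \<open>bdd_below (u0 ` P)\<close>])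
    also have "\<dots> = u_ray e 0 s" using init[of "s *\<^sub>R e"] s e by (simp add: u_ray_def)
    finally show "(INF y\<in>P. u0 y) \<le> u_ray e 0 s" .
  qed (use R x in auto)
  also have "u_ray e 0 (norm x) = u0 x" using init[OF x] xe by (simp add: u_ray_def)
  finally show ?thesis unfolding P_def .
qed

lemma u_ge_INF_initial_exp_decay:
  assumes "x \<in> cball 0 R" "0 \<le> t" "ereal t < T"
  shows "(INF y\<in>{y. 0 < norm y \<and> norm y < R}. u0 y) * exp (- kappa * t) \<le> u x t"
proof (cases "(INF y\<in>{y. 0 < norm y \<and> norm y < R}. u0 y) > 0")
  case True
  thus ?thesis using u_ge_exp_decay INF_punctured_ball_le_initial assms by blast
next
  case False
  hence "(INF y\<in>{y. 0 < norm y \<and> norm y < R}. u0 y) * exp (- kappa * t) \<le> 0"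
    by (simp add: mult_nonpos_nonneg)
  thus ?thesis using upos[OF assms] by linarith
qed

end

lemma classical_sol_imp_radial_classical_solution:
  assumes "classical_sol R chi T u0 u v" "R > 0" "chi > 0" "0 < T" "neumann_zero R u0"
  shows "\<exists>ut gu gv Hu Hv. radial_classical_solution R chi (mean_ball R u0) T u0 u v ut gu gv Hu Hv"
  using assms unfolding classical_sol_def Let_def
  apply (elim exE conjE)
  subgoal for gu Hu ut gv Hv
    apply (rule exI[of _ ut], rule exI[of _ gu], rule exI[of _ gv], rule exI[of _ Hu], rule exI[of _ Hv])
    unfolding radial_classical_solution_def by auto
  done

theorem lemma3p2:
  fixes R chi :: real and Tmax :: ereal
    and u0 :: "real^'n \<Rightarrow> real" and u v :: "real^'n \<Rightarrow> real \<Rightarrow> real"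
  assumes "R > 0" and "chi > 0"
    and "C3_cball R u0" and "radial u0" and "\<forall>x\<in>cball 0 R. u0 x > 0"
    and "neumann_zero R u0"
    and "maximal_sol R chi Tmax u0 u v"
  shows "\<forall>x t. 0 < norm x \<and> norm x < R \<and> 0 < t \<and> ereal t < Tmax \<longrightarrow>
           u x t \<ge> (INF y\<in>{y. 0 < norm y \<and> norm y < R}. u0 y) *
                    exp (- (chi * mean_ball R u0
                            + 2 * (real CARD('n) - 1) * chi * mean_ball R u0
                              / (3 * sqrt 3 * real CARD('n))) * t)"
proof -
  have T: "0 < Tmax" and sol: "classical_sol R chi Tmax u0 u v"
    using assms(7) by (auto simp: maximal_sol_def)
  obtain ut gu gv Hu Hv
    where "radial_classical_solution R chi (mean_ball R u0) Tmax u0 u v ut gu gv Hu Hv"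
    using classical_sol_imp_radial_classical_solution[OF sol assms(1,2) T assms(6)] by blast
  then interpret radial_classical_solution R chi "mean_ball R u0" Tmax u0 u v ut gu gv Hu Hv .
  show ?thesis
    using u_ge_INF_initial_exp_decay unfolding kappa_def by (simp add: less_imp_le)
qed

end
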